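(* Let $G$ be a finite connected graph with a cut vertex $v$ and let $G=H_1\vee H_2$ be a decomposition associated to $v$ ($H_1,H_2$ connected subgraphs with $V(H_1)\cap V(H_2)=\{v\}$, $E(H_1)\cap E(H_2)=\emptyset$, $H_1\cup H_2=G$). Let $m,n\ge0$ be integers and let $G^{(m,n)}=H_1^{(m)}\vee H_2^{(n)}$ be the graph obtained by inserting $m$ new vertices in the interior of every edge of $H_1$ and $n$ new vertices in the interior of every edge of $H_2$. Let $\sigma^*_{m,n}:\operatorname{Div}(G)\to\operatorname{Div}(G^{(m,n)})$ be the map with $\sigma^*_{m,n}D(u)=D(u)$ for $u\in V(G)\subset V(G^{(m,n)})$ and $\sigma^*_{m,n}D(u)=0$ at the new vertices. Then: (1) $\sigma^*_{m,n}(\operatorname{Prin}(G))\subset\operatorname{Prin}(G^{(m,n)})$; (2) if $G$ has no loops, then $r_G(D)=r_{G^{(m,n)}}(\sigma^*_{m,n}D)$ for every $D\in\operatorname{Div}(G)$.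
   Context: Graphs are finite and connected, loops and multiple edges allowed. For a graph $G$, $\operatorname{Div}(G)$ is the free abelian group on $V(G)$; $D\ge0$ means all coefficients are nonnegative. Define $(v\cdot w)$ as the number of edges joining $v,w$ if $v\ne w$, and $(v\cdot v)=-\operatorname{val}(v)+2\operatorname{loop}(v)$ (valency with loops counted twice, minus twice the loops, i.e. loops contribute nothing). $T_v=\sum_w(v\cdot w)w$, $\operatorname{Prin}(G)$ is generated by the $T_v$, and $D\sim D'$ iff $D-D'\in\operatorname{Prin}(G)$. The rank $r_G(D)$ is $-1$ if no effective divisor is equivalent to $D$, and otherwise the maximum $k\ge0$ such that for every effective $E$ of degree $k$ some effective divisor is equivalent to $D-E$. *)

theory Defs
  imports Main
begin

text \<open>Finite multigraphs (loops and multiple edges allowed). Each edge has two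
  endpoints; the orientation of the pair is irrelevant.\<close>

record ('v,'e) mgraph =
  verts :: "'v set"
  edges :: "'e set"
  ends  :: "'e \<Rightarrow> 'v \<times> 'v"

definition wf_graph :: "('v,'e) mgraph \<Rightarrow> bool" where
  "wf_graph G \<longleftrightarrow> finite (verts G) \<and> finite (edges G) \<and>
     (\<forall>e\<in>edges G. fst (ends G e) \<in> verts G \<and> snd (ends G e) \<in> verts G)"

definition adj :: "('v,'e) mgraph \<Rightarrow> 'v \<Rightarrow> 'v \<Rightarrow> bool" where
  "adj G x y \<longleftrightarrow> (\<exists>e\<in>edges G. ends G e = (x,y) \<or> ends G e = (y,x))"

definition connected_graph :: "('v,'e) mgraph \<Rightarrow> bool" where
  "connected_graph G \<longleftrightarrow> verts G \<noteq> {} \<and>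
     (\<forall>x\<in>verts G. \<forall>y\<in>verts G. (adj G)\<^sup>*\<^sup>* x y)"

definition loopless :: "('v,'e) mgraph \<Rightarrow> bool" where
  "loopless G \<longleftrightarrow> (\<forall>e\<in>edges G. fst (ends G e) \<noteq> snd (ends G e))"

definition loops :: "('v,'e) mgraph \<Rightarrow> 'v \<Rightarrow> nat" where
  "loops G v = card {e\<in>edges G. ends G e = (v,v)}"

definition val :: "('v,'e) mgraph \<Rightarrow> 'v \<Rightarrow> nat" where
  "val G v = (\<Sum>e\<in>edges G. (if fst (ends G e) = v then 1 else 0)
                          + (if snd (ends G e) = v then 1 else 0))"

definition inter :: "('v,'e) mgraph \<Rightarrow> 'v \<Rightarrow> 'v \<Rightarrow> int" where
  "inter G v w = (if v \<noteq> w
     then int (card {e\<in>edges G. ends G e = (v,w) \<or> ends G e = (w,v)})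
     else - int (val G v) + 2 * int (loops G v))"

definition Div :: "('v,'e) mgraph \<Rightarrow> ('v \<Rightarrow> int) set" where
  "Div G = {D. \<forall>x. x \<notin> verts G \<longrightarrow> D x = 0}"

definition effective :: "('v \<Rightarrow> int) \<Rightarrow> bool" where
  "effective D \<longleftrightarrow> (\<forall>x. D x \<ge> 0)"

definition deg :: "('v,'e) mgraph \<Rightarrow> ('v \<Rightarrow> int) \<Rightarrow> int" where
  "deg G D = (\<Sum>x\<in>verts G. D x)"

definition T :: "('v,'e) mgraph \<Rightarrow> 'v \<Rightarrow> ('v \<Rightarrow> int)" where
  "T G v = (\<lambda>w. if w \<in> verts G then inter G v w else 0)"

definition Prin :: "('v,'e) mgraph \<Rightarrow> ('v \<Rightarrow> int) set" where
  "Prin G = {(\<lambda>w. \<Sum>v\<in>verts G. c v * T G v w) | c. True}"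

definition lin_equiv :: "('v,'e) mgraph \<Rightarrow> ('v \<Rightarrow> int) \<Rightarrow> ('v \<Rightarrow> int) \<Rightarrow> bool" where
  "lin_equiv G D D' \<longleftrightarrow> (\<lambda>x. D x - D' x) \<in> Prin G"

definition rank :: "('v,'e) mgraph \<Rightarrow> ('v \<Rightarrow> int) \<Rightarrow> int" where
  "rank G D = (if \<not> (\<exists>D'\<in>Div G. effective D' \<and> lin_equiv G D' D) then -1
     else int (GREATEST k::nat. \<forall>E\<in>Div G. effective E \<and> deg G E = int k \<longrightarrow>
        (\<exists>D'\<in>Div G. effective D' \<and> lin_equiv G D' (\<lambda>x. D x - E x))))"

definition subgraph_on :: "('v,'e) mgraph \<Rightarrow> 'v set \<Rightarrow> 'e set \<Rightarrow> ('v,'e) mgraph" where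
  "subgraph_on G V E = \<lparr>verts = V, edges = E, ends = ends G\<rparr>"

definition wedge_decomp :: "('v,'e) mgraph \<Rightarrow> 'v \<Rightarrow> 'v set \<Rightarrow> 'e set \<Rightarrow> 'v set \<Rightarrow> 'e set \<Rightarrow> bool" where
  "wedge_decomp G v V1 E1 V2 E2 \<longleftrightarrow>
     V1 \<union> V2 = verts G \<and> V1 \<inter> V2 = {v} \<and> E1 \<union> E2 = edges G \<and> E1 \<inter> E2 = {} \<and>
     E1 \<noteq> {} \<and> E2 \<noteq> {} \<and>
     wf_graph (subgraph_on G V1 E1) \<and> wf_graph (subgraph_on G V2 E2) \<and>
     connected_graph (subgraph_on G V1 E1) \<and> connected_graph (subgraph_on G V2 E2)"

text \<open>Subdivision: edge e is replaced by a path with k e new interior vertices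
  Inr (e,1), ..., Inr (e, k e); old vertices become Inl u.\<close>
definition sub_pt :: "('v,'e) mgraph \<Rightarrow> ('e \<Rightarrow> nat) \<Rightarrow> 'e \<Rightarrow> nat \<Rightarrow> 'v + 'e \<times> nat" where
  "sub_pt G k e j = (if j = 0 then Inl (fst (ends G e))
     else if j = k e + 1 then Inl (snd (ends G e)) else Inr (e, j))"

definition subdivide :: "('v,'e) mgraph \<Rightarrow> ('e \<Rightarrow> nat) \<Rightarrow> ('v + 'e \<times> nat, 'e \<times> nat) mgraph" where
  "subdivide G k = \<lparr>verts = Inl ` verts G \<union> {Inr (e,i) | e i. e \<in> edges G \<and> 1 \<le> i \<and> i \<le> k e},
     edges = {(e,i). e \<in> edges G \<and> i \<le> k e},
     ends = (\<lambda>(e,i). (sub_pt G k e i, sub_pt G k e (i+1)))\<rparr>"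

definition subdiv_mn :: "('v,'e) mgraph \<Rightarrow> 'e set \<Rightarrow> nat \<Rightarrow> nat \<Rightarrow> ('v + 'e \<times> nat, 'e \<times> nat) mgraph" where
  "subdiv_mn G E1 m n = subdivide G (\<lambda>e. if e \<in> E1 then m else n)"

definition sigma_star :: "('v \<Rightarrow> int) \<Rightarrow> ('v + 'e \<times> nat \<Rightarrow> int)" where
  "sigma_star D = (\<lambda>x. case x of Inl u \<Rightarrow> D u | Inr _ \<Rightarrow> 0)"

end

theory Submission
  imports Defs "HOL-Library.FuncSet" "HOL-Library.Indicator_Function"
begin

text \<open>Write \<open>laplacian H c = (\<Sum>v. c v * T H v)\<close> for the principal divisor of a firing
  script \<open>c\<close>. For (1), a script \<open>c\<close> on \<open>G\<close> is lifted to the subdivision by multiplying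
  \<open>c - c v\<close> by \<open>m + 1\<close> on \<open>H\<^sub>1\<close> and by \<open>n + 1\<close> on \<open>H\<^sub>2\<close> (the two
  scalings only meet at \<open>v\<close>, where the normalised script vanishes) and interpolating linearly
  along every subdivided edge; the lift is harmonic at the new vertices, so its principal divisor
  is \<open>\<sigma>\<^sup>* (laplacian G c)\<close>. Conversely, a script \<open>f\<close> on the subdivision making
  \<open>\<sigma>\<^sup>* D\<close> effective is convex along every subdivided edge, so rounding down
  \<open>(f u - f v) / (m + 1)\<close> resp. \<open>(n + 1)\<close> gives a script on \<open>G\<close> making \<open>D\<close>
  effective. Hence \<open>D\<close> and \<open>\<sigma>\<^sup>* D\<close> are together equivalent to effective divisors or not.

  For (2) it then suffices to test the rank of \<open>\<sigma>\<^sup>* D\<close> against effective divisors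
  supported on old vertices: if \<open>Q - p\<close> and \<open>Q - q\<close> are equivalent to effective divisors
  for the ends \<open>p, q\<close> of a subdivided loop-free edge, then so is \<open>Q - x\<close> for every new vertex
  \<open>x\<close> on it. Indeed, let \<open>C\<close> be the \<open>x\<close>-reduced divisor equivalent to \<open>Q\<close>
  and suppose \<open>C x = 0\<close>. Chips on both sides of \<open>x\<close> are impossible, since then the
  complement of the chip-free segment around \<open>x\<close> could fire. So one side is chip-free; then
  \<open>C\<close> is also reduced at the end on that side and vanishes there, so removing a chip at that
  end leaves no effective equivalent divisor, a contradiction.\<close>

section \<open>Principal divisors of firing scripts\<close>

definition laplacian :: "('v,'e) mgraph \<Rightarrow> ('v \<Rightarrow> int) \<Rightarrow> 'v \<Rightarrow> int" where
  "laplacian H c = (\<lambda>w. \<Sum>v\<in>verts H. c v * T H v w)"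

lemma Prin_eq_range_laplacian: "Prin H = range (laplacian H)"
  unfolding Prin_def laplacian_def by auto

lemma laplacian_outside: "w \<notin> verts H \<Longrightarrow> laplacian H c w = 0"
  unfolding laplacian_def T_def by simp

lemma laplacian_add: "laplacian H (\<lambda>v. a v + b v) w = laplacian H a w + laplacian H b w"
  unfolding laplacian_def by (simp add: algebra_simps sum.distrib)

lemma laplacian_diff: "laplacian H (\<lambda>v. a v - b v) w = laplacian H a w - laplacian H b w"
  unfolding laplacian_def by (simp add: algebra_simps sum_subtractf)

definition edge_inter :: "('v,'e) mgraph \<Rightarrow> 'e \<Rightarrow> 'v \<Rightarrow> 'v \<Rightarrow> int" where
  "edge_inter H e v w = (if v \<noteq> w then (if ends H e = (v,w) \<or> ends H e = (w,v) then 1 else 0)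
     else (if ends H e = (w,w) then 2 else 0) - (if fst (ends H e) = w then 1 else 0)
       - (if snd (ends H e) = w then 1 else 0))"

lemma inter_eq_sum_edge_inter:
  assumes "finite (edges H)"
  shows "inter H v w = (\<Sum>e\<in>edges H. edge_inter H e v w)"
proof (cases "v = w")
  case True
  have "int (val H w) = (\<Sum>e\<in>edges H. if fst (ends H e) = w then 1 else 0)
      + (\<Sum>e\<in>edges H. if snd (ends H e) = w then 1 else 0)"
    unfolding val_def of_nat_sum sum.distrib[symmetric] by (rule sum.cong) auto
  moreover have "2 * int (loops H w) = (\<Sum>e\<in>edges H. if ends H e = (w,w) then 2 else 0)"
    unfolding loops_def using assms by (simp add: sum.If_cases Int_def)
  ultimately show ?thesis
    using True unfolding inter_def edge_inter_def by (simp add: sum_subtractf)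
next
  case False
  then show ?thesis
    using assms unfolding inter_def edge_inter_def by (simp add: sum.If_cases Int_def)
qed

definition edge_flow :: "('v,'e) mgraph \<Rightarrow> ('v \<Rightarrow> int) \<Rightarrow> 'v \<Rightarrow> 'e \<Rightarrow> int" where
  "edge_flow H c w e = (if fst (ends H e) = w then c (snd (ends H e)) - c w else 0)
              + (if snd (ends H e) = w then c (fst (ends H e)) - c w else 0)"

lemma sum_mult_edge_inter:
  assumes "finite V" "w \<in> V" "fst (ends H e) \<in> V" "snd (ends H e) \<in> V"
  shows "(\<Sum>v\<in>V. c v * edge_inter H e v w) = edge_flow H c w e"
proof -
  obtain p q where pq: "ends H e = (p,q)" by force
  have "(\<Sum>v\<in>V. c v * edge_inter H e v w)
      = c w * edge_inter H e w w + (\<Sum>v\<in>V - {w}. c v * edge_inter H e v w)"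
    using assms(1,2) by (simp add: sum.remove)
  also have "(\<Sum>v\<in>V - {w}. c v * edge_inter H e v w)
      = (\<Sum>v\<in>V - {w}. (if v = p \<and> q = w then c p else 0) + (if v = q \<and> p = w then c q else 0))"
    by (rule sum.cong) (auto simp: edge_inter_def pq)
  also have "\<dots> = (if p \<noteq> w \<and> q = w then c p else 0) + (if q \<noteq> w \<and> p = w then c q else 0)"
    using assms pq by (simp add: sum.distrib)
  finally show ?thesis
    unfolding edge_flow_def edge_inter_def by (auto simp: pq)
qed

lemma laplacian_eq_sum_edge_flow:
  assumes wf: "wf_graph H" and w: "w \<in> verts H"
  shows "laplacian H c w = (\<Sum>e\<in>edges H. edge_flow H c w e)"
proof -
  have fE: "finite (edges H)" using wf unfolding wf_graph_def by auto
  have "laplacian H c w = (\<Sum>v\<in>verts H. \<Sum>e\<in>edges H. c v * edge_inter H e v w)"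
    unfolding laplacian_def T_def using w inter_eq_sum_edge_inter[OF fE]
    by (simp add: sum_distrib_left)
  also have "\<dots> = (\<Sum>e\<in>edges H. \<Sum>v\<in>verts H. c v * edge_inter H e v w)"
    by (rule sum.swap)
  also have "\<dots> = (\<Sum>e\<in>edges H. edge_flow H c w e)"
    using wf w by (intro sum.cong refl sum_mult_edge_inter) (auto simp: wf_graph_def)
  finally show ?thesis .
qed

lemma laplacian_const: "wf_graph H \<Longrightarrow> laplacian H (\<lambda>v. k) w = 0"
  by (cases "w \<in> verts H")
    (auto simp: laplacian_eq_sum_edge_flow edge_flow_def laplacian_outside intro!: sum.neutral)

lemma deg_laplacian:
  assumes wf: "wf_graph H"
  shows "deg H (laplacian H c) = 0"
proof -
  have fV: "finite (verts H)"
    and ends_in: "\<And>e. e \<in> edges H \<Longrightarrow> fst (ends H e) \<in> verts H \<and> snd (ends H e) \<in> verts H"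
    using wf unfolding wf_graph_def by auto
  have flow_balance: "(\<Sum>w\<in>verts H. edge_flow H c w e) = 0" if e: "e \<in> edges H" for e
  proof -
    have "(\<Sum>w\<in>verts H. edge_flow H c w e)
       = (\<Sum>w\<in>verts H. (if fst (ends H e) = w then c (snd (ends H e)) - c (fst (ends H e)) else 0)
           + (if snd (ends H e) = w then c (fst (ends H e)) - c (snd (ends H e)) else 0))"
      unfolding edge_flow_def by (rule sum.cong) auto
    also have "\<dots> = 0" using ends_in[OF e] fV by (simp add: sum.distrib)
    finally show ?thesis .
  qed
  have "deg H (laplacian H c) = (\<Sum>w\<in>verts H. \<Sum>e\<in>edges H. edge_flow H c w e)"
    unfolding deg_def using laplacian_eq_sum_edge_flow[OF wf] by simp
  also have "\<dots> = (\<Sum>e\<in>edges H. \<Sum>w\<in>verts H. edge_flow H c w e)" by (rule sum.swap)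
  also have "\<dots> = 0" using flow_balance by simp
  finally show ?thesis .
qed

lemma deg_add: "deg H (\<lambda>x. a x + b x) = deg H a + deg H b"
  unfolding deg_def by (simp add: sum.distrib)

lemma deg_diff: "deg H (\<lambda>x. a x - b x) = deg H a - deg H b"
  unfolding deg_def by (simp add: sum_subtractf)

lemma deg_indicator_singleton: "finite (verts H) \<Longrightarrow> x \<in> verts H \<Longrightarrow> deg H (indicator {x}) = 1"
  unfolding deg_def by (simp add: indicator_def)

lemma effective_le_deg:
  assumes "finite (verts H)" "effective D" "x \<in> verts H"
  shows "D x \<le> deg H D"
  unfolding deg_def using assms by (intro member_le_sum) (auto simp: effective_def)

lemma deg_nonneg: "effective D \<Longrightarrow> 0 \<le> deg H D"
  unfolding deg_def by (intro sum_nonneg) (auto simp: effective_def)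

lemma symp_adj: "symp (adj H)"
  unfolding adj_def by (auto intro: sympI)

lemma rtranclp_exits_set:
  assumes "r\<^sup>*\<^sup>* x y" "x \<in> U" "y \<notin> U"
  shows "\<exists>u w. u \<in> U \<and> w \<notin> U \<and> r u w"
  using assms by (induction rule: rtranclp_induct) auto

section \<open>Maximum principle\<close>

lemma finite_obtains_max:
  fixes f :: "'a \<Rightarrow> 'b::linorder"
  assumes "finite A" "A \<noteq> {}"
  obtains x where "x \<in> A" "\<And>y. y \<in> A \<Longrightarrow> f y \<le> f x"
proof -
  from Max_in[of "f ` A"] assms obtain x where "x \<in> A" "Max (f ` A) = f x" by blast
  with assms that show thesis by (metis Max_ge finite_imageI image_eqI)
qed

lemma adj_in_verts:
  assumes wf: "wf_graph H" and "adj H u w"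
  shows "u \<in> verts H" "w \<in> verts H"
proof -
  obtain e where e: "e \<in> edges H" "ends H e = (u,w) \<or> ends H e = (w,u)"
    using assms(2) unfolding adj_def by auto
  have "fst (ends H e) \<in> verts H" "snd (ends H e) \<in> verts H"
    using wf e(1) unfolding wf_graph_def by auto
  with e(2) show "u \<in> verts H" "w \<in> verts H" by auto
qed

lemma laplacian_at_max_nonpos:
  assumes wf: "wf_graph H" and w: "w \<in> verts H" and max: "\<And>u. u \<in> verts H \<Longrightarrow> f u \<le> f w"
  shows "laplacian H f w \<le> 0"
proof -
  have "edge_flow H f w e \<le> 0" if "e \<in> edges H" for e
    using that wf max unfolding wf_graph_def edge_flow_def by auto
  then show ?thesis
    unfolding laplacian_eq_sum_edge_flow[OF wf w] by (simp add: sum_nonpos)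
qed

lemma laplacian_at_max_neg:
  assumes wf: "wf_graph H" and w: "w \<in> verts H" and max: "\<And>u. u \<in> verts H \<Longrightarrow> f u \<le> f w"
    and adj: "adj H w u" and less: "f u < f w"
  shows "laplacian H f w < 0"
proof -
  have fE: "finite (edges H)"
    and ends_in: "\<And>e. e \<in> edges H \<Longrightarrow> fst (ends H e) \<in> verts H \<and> snd (ends H e) \<in> verts H"
    using wf unfolding wf_graph_def by auto
  obtain e where e: "e \<in> edges H" "ends H e = (w,u) \<or> ends H e = (u,w)"
    using adj unfolding adj_def by auto
  have "u \<noteq> w" using less by auto
  have "edge_flow H f w e' \<le> 0" if "e' \<in> edges H" for e'
    using ends_in[OF that] max unfolding edge_flow_def by auto
  moreover have "edge_flow H f w e < 0"
    using e(2) less \<open>u \<noteq> w\<close> unfolding edge_flow_def by (elim disjE) auto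
  ultimately have "(\<Sum>e'\<in>edges H. edge_flow H f w e') < (\<Sum>e'\<in>edges H. 0)"
    using fE e(1) by (intro sum_strict_mono_ex1) auto
  then show ?thesis
    unfolding laplacian_eq_sum_edge_flow[OF wf w] by simp
qed

lemma laplacian_eq_zero_imp_constant:
  assumes wf: "wf_graph H" and con: "connected_graph H"
    and zero: "\<And>w. w \<in> verts H \<Longrightarrow> laplacian H g w = 0"
    and x: "x \<in> verts H" and y: "y \<in> verts H"
  shows "g y = g x"
proof -
  have fV: "finite (verts H)" using wf unfolding wf_graph_def by auto
  obtain w0 where w0: "w0 \<in> verts H" and max: "\<And>u. u \<in> verts H \<Longrightarrow> g u \<le> g w0"
    using finite_obtains_max[OF fV, of g] x by blast
  define U where "U = {w\<in>verts H. g w = g w0}"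
  have "verts H \<subseteq> U"
  proof (rule ccontr)
    assume "\<not> verts H \<subseteq> U"
    then obtain y' where y': "y' \<in> verts H" "y' \<notin> U" by auto
    have "(adj H)\<^sup>*\<^sup>* w0 y'" using con w0 y' unfolding connected_graph_def by auto
    then obtain u w where uw: "u \<in> U" "w \<notin> U" "adj H u w"
      using rtranclp_exits_set[of "adj H" w0 y' U] w0 y' unfolding U_def by auto
    have "w \<in> verts H" by (rule adj_in_verts(2)[OF wf uw(3)])
    then have "g w < g u" using uw(1,2) max unfolding U_def by force
    then have "laplacian H g u < 0"
      using laplacian_at_max_neg[OF wf _ _ uw(3)] uw(1) max unfolding U_def by auto
    then show False using zero uw(1) unfolding U_def by auto
  qed
  then have "g x = g w0" "g y = g w0" using x y unfolding U_def by blast+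
  then show ?thesis by simp
qed

section \<open>Reduced divisors\<close>

definition has_effective_equiv :: "('v,'e) mgraph \<Rightarrow> ('v \<Rightarrow> int) \<Rightarrow> bool" where
  "has_effective_equiv H D \<longleftrightarrow> (\<exists>D'\<in>Div H. effective D' \<and> lin_equiv H D' D)"

lemma lin_equiv_iff: "lin_equiv H A B \<longleftrightarrow> (\<exists>c. \<forall>x. A x = B x + laplacian H c x)"
proof
  assume "lin_equiv H A B"
  then obtain c where "(\<lambda>x. A x - B x) = laplacian H c"
    unfolding lin_equiv_def Prin_eq_range_laplacian by auto
  then show "\<exists>c. \<forall>x. A x = B x + laplacian H c x"
    by (metis add_diff_cancel_left' diff_add_cancel)
next
  assume "\<exists>c. \<forall>x. A x = B x + laplacian H c x"
  then obtain c where "\<forall>x. A x = B x + laplacian H c x" ..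
  then have "(\<lambda>x. A x - B x) = laplacian H c" by auto
  then show "lin_equiv H A B" unfolding lin_equiv_def Prin_eq_range_laplacian by auto
qed

lemma Div_add_laplacian: "D \<in> Div H \<Longrightarrow> (\<lambda>x. D x + laplacian H c x) \<in> Div H"
  unfolding Div_def by (auto simp: laplacian_outside)

lemma Div_diff_indicator: "Q \<in> Div H \<Longrightarrow> y \<in> verts H \<Longrightarrow> (\<lambda>w. Q w - indicator {y} w) \<in> Div H"
  unfolding Div_def by (auto split: split_indicator)

lemma has_effective_equiv_iff:
  assumes "D \<in> Div H"
  shows "has_effective_equiv H D \<longleftrightarrow> (\<exists>c. \<forall>x. 0 \<le> D x + laplacian H c x)"
proof
  assume "has_effective_equiv H D"
  then obtain D' c where "effective D'" "\<forall>x. D' x = D x + laplacian H c x"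
    unfolding has_effective_equiv_def lin_equiv_iff by blast
  then show "\<exists>c. \<forall>x. 0 \<le> D x + laplacian H c x" unfolding effective_def by auto
next
  assume "\<exists>c. \<forall>x. 0 \<le> D x + laplacian H c x"
  then obtain c where "\<forall>x. 0 \<le> D x + laplacian H c x" ..
  then show "has_effective_equiv H D"
    unfolding has_effective_equiv_def lin_equiv_iff effective_def
    using Div_add_laplacian[OF assms] by (intro bexI[of _ "\<lambda>x. D x + laplacian H c x"]) auto
qed

lemma has_effective_equiv_of_diff_indicator:
  assumes Q: "Q \<in> Div H" and y: "y \<in> verts H"
    and "has_effective_equiv H (\<lambda>w. Q w - indicator {y} w)"
  shows "has_effective_equiv H Q"
proof -
  obtain c where c: "\<forall>w. 0 \<le> Q w - indicator {y} w + laplacian H c w"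
    using assms(3) unfolding has_effective_equiv_iff[OF Div_diff_indicator[OF Q y]] ..
  have "0 \<le> Q w + laplacian H c w" for w
  proof -
    have "0 \<le> (indicator {y} w :: int)" by simp
    then show ?thesis using c[rule_format, of w] by linarith
  qed
  then show ?thesis unfolding has_effective_equiv_iff[OF Q] by blast
qed

lemma has_effective_equiv_diff_indicator_of_chip:
  assumes Q: "Q \<in> Div H" and y: "y \<in> verts H" and C: "\<forall>w. C w = Q w + laplacian H c w"
    and eff: "effective C" and chip: "C y \<noteq> 0"
  shows "has_effective_equiv H (\<lambda>w. Q w - indicator {y} w)"
proof -
  have "0 \<le> Q w - indicator {y} w + laplacian H c w" for w
  proof (cases "w = y")
    case True
    then have "0 < C w" using eff chip unfolding effective_def by (metis order_le_less)
    then show ?thesis using C[rule_format, of w] True by simp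
  next
    case False
    then show ?thesis using C[rule_format, of w] eff unfolding effective_def by (metis indicator_simps(2)
        singletonD diff_zero)
  qed
  then show ?thesis using has_effective_equiv_iff[OF Div_diff_indicator[OF Q y]] by blast
qed

lemma edge_flow_indicator_mem:
  assumes "w \<in> U"
  shows "edge_flow H (indicator U) w e
    = - (if fst (ends H e) = w \<and> snd (ends H e) \<notin> U then 1 else 0)
      - (if snd (ends H e) = w \<and> fst (ends H e) \<notin> U then 1 else 0)"
  using assms unfolding edge_flow_def by (auto split: split_indicator)

lemma laplacian_indicator_nonneg:
  assumes wf: "wf_graph H" and "w \<notin> U"
  shows "0 \<le> laplacian H (indicator U) w"
proof (cases "w \<in> verts H")
  case True
  have "0 \<le> edge_flow H (indicator U) w e" for e
    using assms(2) unfolding edge_flow_def by (auto split: split_indicator)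
  then show ?thesis
    unfolding laplacian_eq_sum_edge_flow[OF wf True] by (simp add: sum_nonneg)
qed (simp add: laplacian_outside)

text \<open>\<open>C + laplacian H (indicator U)\<close> is \<open>C\<close> after every vertex of \<open>U\<close> has fired once.\<close>
definition reduced :: "('v,'e) mgraph \<Rightarrow> 'v \<Rightarrow> ('v \<Rightarrow> int) \<Rightarrow> bool" where
  "reduced H x C \<longleftrightarrow> C \<in> Div H \<and> effective C \<and>
     (\<forall>U. U \<subseteq> verts H \<longrightarrow> U \<noteq> {} \<longrightarrow> x \<notin> U \<longrightarrow>
        \<not> effective (\<lambda>w. C w + laplacian H (indicator U) w))"

lemma reduced_laplacian_at_base_nonpos:
  assumes wf: "wf_graph H" and x: "x \<in> verts H" and red: "reduced H x C"
    and eff: "\<forall>w. 0 \<le> C w + laplacian H f w"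
  shows "laplacian H f x \<le> 0"
proof -
  have fV: "finite (verts H)"
    and ends_in: "\<And>e. e \<in> edges H \<Longrightarrow> fst (ends H e) \<in> verts H \<and> snd (ends H e) \<in> verts H"
    using wf unfolding wf_graph_def by auto
  obtain w0 where w0: "w0 \<in> verts H" and max: "\<And>u. u \<in> verts H \<Longrightarrow> f u \<le> f w0"
    using finite_obtains_max[OF fV, of f] x by blast
  define U where "U = {w\<in>verts H. f w = f w0}"
  have C_nonneg: "0 \<le> C w" for w using red unfolding reduced_def effective_def by auto
  have fire: "0 \<le> C w + laplacian H (indicator U) w" for w
  proof (cases "w \<in> U")
    case True
    then have wV: "w \<in> verts H" unfolding U_def by auto
    have "edge_flow H f w e \<le> edge_flow H (indicator U) w e" if "e \<in> edges H" for e
    proof -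
      have "f u - f w \<le> indicator U u - indicator U w" if "u \<in> verts H" for u
        using that True max[OF that] unfolding U_def by (auto split: split_indicator)
      then show ?thesis using ends_in[OF \<open>e \<in> edges H\<close>] unfolding edge_flow_def by auto
    qed
    then have "laplacian H f w \<le> laplacian H (indicator U) w"
      unfolding laplacian_eq_sum_edge_flow[OF wf wV] by (rule sum_mono)
    then show ?thesis using eff[rule_format, of w] by linarith
  next
    case False
    then show ?thesis using C_nonneg laplacian_indicator_nonneg[OF wf] by (simp add: add_nonneg_nonneg)
  qed
  have "x \<in> U"
  proof (rule ccontr)
    assume "x \<notin> U"
    moreover have "U \<subseteq> verts H" "U \<noteq> {}" using w0 unfolding U_def by auto
    ultimately have "\<not> effective (\<lambda>w. C w + laplacian H (indicator U) w)"
      using red unfolding reduced_def by blast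
    with fire show False unfolding effective_def by simp
  qed
  then show ?thesis
    using laplacian_at_max_nonpos[OF wf x, of f] max unfolding U_def by simp
qed

lemma reduced_zero_at_base:
  assumes wf: "wf_graph H" and y: "y \<in> verts H" and red: "reduced H y C" and Cy: "C y = 0"
    and C: "\<forall>w. C w = Q w + laplacian H c w" and Q: "Q \<in> Div H"
  shows "\<not> has_effective_equiv H (\<lambda>w. Q w - indicator {y} w)"
proof
  assume "has_effective_equiv H (\<lambda>w. Q w - indicator {y} w)"
  then obtain b where b: "\<forall>w. 0 \<le> Q w - indicator {y} w + laplacian H b w"
    using has_effective_equiv_iff[OF Div_diff_indicator[OF Q y]] by auto
  have eq: "C w + laplacian H (\<lambda>v. b v - c v) w = Q w + laplacian H b w" for w
    using C by (simp add: laplacian_diff)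
  have "\<forall>w. 0 \<le> C w + laplacian H (\<lambda>v. b v - c v) w"
  proof
    fix w show "0 \<le> C w + laplacian H (\<lambda>v. b v - c v) w"
      using b[rule_format, of w] eq[of w] by (auto split: split_indicator_asm)
  qed
  from reduced_laplacian_at_base_nonpos[OF wf y red this]
  have "laplacian H (\<lambda>v. b v - c v) y \<le> 0" .
  moreover have "1 \<le> C y + laplacian H (\<lambda>v. b v - c v) y"
    using b[rule_format, of y] eq[of y] by simp
  ultimately show False using Cy by simp
qed

lemma finite_bounded_functions:
  assumes "finite V"
  shows "finite {D::'a \<Rightarrow> int. (\<forall>w. w \<notin> V \<longrightarrow> D w = 0) \<and> (\<forall>w. 0 \<le> D w \<and> D w \<le> d)}"
proof -
  have "{D::'a \<Rightarrow> int. (\<forall>w. w \<notin> V \<longrightarrow> D w = 0) \<and> (\<forall>w. 0 \<le> D w \<and> D w \<le> d)}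
     \<subseteq> (\<lambda>h w. if w \<in> V then h w else 0) ` (PiE V (\<lambda>_. {0..d}))"
  proof
    fix D :: "'a \<Rightarrow> int"
    assume D: "D \<in> {D. (\<forall>w. w \<notin> V \<longrightarrow> D w = 0) \<and> (\<forall>w. 0 \<le> D w \<and> D w \<le> d)}"
    then have "D = (\<lambda>w. if w \<in> V then restrict D V w else 0)" by (auto simp: fun_eq_iff)
    moreover have "restrict D V \<in> PiE V (\<lambda>_. {0..d})" using D by auto
    ultimately show "D \<in> (\<lambda>h w. if w \<in> V then h w else 0) ` (PiE V (\<lambda>_. {0..d}))" by blast
  qed
  moreover have "finite (PiE V (\<lambda>_. {0..d::int}))" using assms by (simp add: finite_PiE)
  ultimately show ?thesis by (meson finite_imageI finite_subset)
qed

lemma finite_effective_scripts: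
  assumes wf: "wf_graph H" and con: "connected_graph H" and x: "x \<in> verts H" and C: "C \<in> Div H"
  shows "finite {f. (\<forall>w. w \<notin> verts H \<longrightarrow> f w = 0) \<and> f x = 0 \<and> (\<forall>w. 0 \<le> C w + laplacian H f w)}"
    (is "finite ?S")
proof -
  have fV: "finite (verts H)" using wf unfolding wf_graph_def by auto
  define fire where "fire f = (\<lambda>w. C w + laplacian H f w)" for f
  have inj: "inj_on fire ?S"
  proof
    fix f1 f2 assume f1: "f1 \<in> ?S" and f2: "f2 \<in> ?S" and eq: "fire f1 = fire f2"
    have "laplacian H (\<lambda>v. f1 v - f2 v) w = 0" for w
      using fun_cong[OF eq, of w] unfolding fire_def laplacian_diff by simp
    then have "f1 y - f2 y = f1 x - f2 x" if "y \<in> verts H" for y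
      using laplacian_eq_zero_imp_constant[OF wf con _ x that, of "\<lambda>v. f1 v - f2 v"] by simp
    then have "f1 y = f2 y" for y using f1 f2 by (cases "y \<in> verts H") auto
    then show "f1 = f2" ..
  qed
  have bounded: "fire ` ?S \<subseteq> {D. (\<forall>w. w \<notin> verts H \<longrightarrow> D w = 0) \<and> (\<forall>w. 0 \<le> D w \<and> D w \<le> deg H C)}"
  proof clarify
    fix f assume f: "\<forall>w. w \<notin> verts H \<longrightarrow> f w = 0" "f x = 0" "\<forall>w. 0 \<le> C w + laplacian H f w"
    have eff: "effective (fire f)" using f unfolding fire_def effective_def by auto
    have deg: "deg H (fire f) = deg H C" unfolding fire_def deg_add deg_laplacian[OF wf] by simp
    have out: "\<forall>w. w \<notin> verts H \<longrightarrow> fire f w = 0"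
      using Div_add_laplacian[OF C] unfolding fire_def Div_def by simp
    have "fire f w \<le> deg H C" for w
      using effective_le_deg[OF fV eff] deg_nonneg[OF eff, of H] out deg by (cases "w \<in> verts H") auto
    then show "(\<forall>w. w \<notin> verts H \<longrightarrow> fire f w = 0) \<and> (\<forall>w. 0 \<le> fire f w \<and> fire f w \<le> deg H C)"
      using out eff unfolding effective_def by auto
  qed
  have "finite (fire ` ?S)"
    using finite_subset[OF bounded finite_bounded_functions[OF fV]] .
  then show ?thesis using inj by (rule finite_imageD)
qed

lemma reduced_divisor_exists:
  assumes wf: "wf_graph H" and con: "connected_graph H" and x: "x \<in> verts H"
    and Q: "Q \<in> Div H" and Q_eff: "has_effective_equiv H Q"
  obtains C c where "reduced H x C" "\<forall>w. C w = Q w + laplacian H c w"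
proof -
  have fV: "finite (verts H)" using wf unfolding wf_graph_def by auto
  obtain c where c: "\<forall>w. 0 \<le> Q w + laplacian H c w"
    using Q_eff has_effective_equiv_iff[OF Q] by auto
  define C0 where "C0 = (\<lambda>w. Q w + laplacian H c w)"
  have C0: "C0 \<in> Div H" unfolding C0_def using Div_add_laplacian[OF Q] .
  define S where "S = {f. (\<forall>w. w \<notin> verts H \<longrightarrow> f w = 0) \<and> f x = 0 \<and> (\<forall>w. 0 \<le> C0 w + laplacian H f w)}"
  have "finite S" unfolding S_def using finite_effective_scripts[OF wf con x C0] .
  moreover have "(\<lambda>_. 0) \<in> S" unfolding S_def C0_def using c laplacian_const[OF wf, of 0] by auto
  ultimately obtain f where fS: "f \<in> S" and f_max: "\<And>g. g \<in> S \<Longrightarrow> sum g (verts H) \<le> sum f (verts H)"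
    using finite_obtains_max[of S "\<lambda>g. sum g (verts H)"] by blast
  have "reduced H x (\<lambda>w. C0 w + laplacian H f w)"
    unfolding reduced_def
  proof (intro conjI allI impI notI)
    show "(\<lambda>w. C0 w + laplacian H f w) \<in> Div H" using Div_add_laplacian[OF C0] .
    show "effective (\<lambda>w. C0 w + laplacian H f w)" using fS unfolding S_def effective_def by auto
    fix U assume U: "U \<subseteq> verts H" "U \<noteq> {}" "x \<notin> U"
      and fire: "effective (\<lambda>w. C0 w + laplacian H f w + laplacian H (indicator U) w)"
    have "(\<lambda>w. f w + indicator U w) \<in> S"
      using fS U fire unfolding S_def effective_def
    by (auto simp: laplacian_add add.assoc split: split_indicator)
    then have "sum (\<lambda>w. f w + indicator U w) (verts H) \<le> sum f (verts H)" by (rule f_max)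
    moreover have "sum (\<lambda>w. f w + indicator U w) (verts H) = sum f (verts H) + int (card U)"
      using U fV by (simp add: sum.distrib Int_absorb1 indicator_def)
    moreover have "card U > 0" using U fV by (meson card_gt_0_iff finite_subset)
    ultimately show False by linarith
  qed
  moreover have "\<forall>w. C0 w + laplacian H f w = Q w + laplacian H (\<lambda>v. c v + f v) w"
    unfolding C0_def laplacian_add by simp
  ultimately show thesis using that by blast
qed

section \<open>Testing the rank against divisors with prescribed support\<close>

definition rank_test :: "('v,'e) mgraph \<Rightarrow> ('v \<Rightarrow> int) \<Rightarrow> 'v set \<Rightarrow> nat \<Rightarrow> bool" where
  "rank_test H Q A k \<longleftrightarrow> (\<forall>E\<in>Div H. effective E \<and> deg H E = int k \<and> (\<forall>w. w \<notin> A \<longrightarrow> E w = 0)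
     \<longrightarrow> has_effective_equiv H (\<lambda>w. Q w - E w))"

lemma rank_eq_Greatest_rank_test:
  "rank H D = (if has_effective_equiv H D then int (GREATEST k. rank_test H D (verts H) k) else -1)"
proof -
  have "rank_test H D (verts H) k \<longleftrightarrow> (\<forall>E\<in>Div H. effective E \<and> deg H E = int k \<longrightarrow>
      (\<exists>D'\<in>Div H. effective D' \<and> lin_equiv H D' (\<lambda>x. D x - E x)))" for k
    unfolding rank_test_def has_effective_equiv_def Div_def by auto
  then show ?thesis unfolding rank_def has_effective_equiv_def by simp
qed

lemma rank_test_mono: "A \<subseteq> B \<Longrightarrow> rank_test H Q B k \<Longrightarrow> rank_test H Q A k"
  unfolding rank_test_def by blast

lemma effective_deg_eq_0:
  assumes "finite (verts H)" "E \<in> Div H" "effective E" "deg H E = 0"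
  shows "E w = 0"
proof (cases "w \<in> verts H")
  case True
  have "\<forall>x\<in>verts H. E x = 0"
    using assms sum_nonneg_eq_0_iff[of "verts H" E] unfolding deg_def effective_def by auto
  then show ?thesis using True by auto
next
  case False
  then show ?thesis using assms(2) unfolding Div_def by auto
qed

lemma rank_test_0:
  assumes "finite (verts H)" "Q \<in> Div H"
  shows "rank_test H Q A 0 \<longleftrightarrow> has_effective_equiv H Q"
proof
  assume "rank_test H Q A 0"
  moreover have "(\<lambda>_. 0) \<in> Div H" "effective (\<lambda>_. 0)" "deg H (\<lambda>_. 0) = 0"
    unfolding Div_def effective_def deg_def by auto
  ultimately show "has_effective_equiv H Q" unfolding rank_test_def by fastforce
next
  assume Q_eff: "has_effective_equiv H Q"
  show "rank_test H Q A 0" unfolding rank_test_def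
  proof (intro ballI impI)
    fix E assume "E \<in> Div H" "effective E \<and> deg H E = int 0 \<and> (\<forall>w. w \<notin> A \<longrightarrow> E w = 0)"
    then have "(\<lambda>w. Q w - E w) = Q" using effective_deg_eq_0[OF assms(1)] by auto
    then show "has_effective_equiv H (\<lambda>w. Q w - E w)" using Q_eff by simp
  qed
qed

lemma rank_test_Suc_imp:
  assumes fV: "finite (verts H)" and test: "rank_test H Q A (Suc k)" and y: "y \<in> A" "y \<in> verts H"
  shows "rank_test H (\<lambda>w. Q w - indicator {y} w) A k"
  unfolding rank_test_def
proof (intro ballI impI)
  fix E assume E: "E \<in> Div H" "effective E \<and> deg H E = int k \<and> (\<forall>w. w \<notin> A \<longrightarrow> E w = 0)"
  define E' where "E' w = E w + indicator {y} w" for w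
  have "E' \<in> Div H" using E(1) y unfolding E'_def Div_def by (auto split: split_indicator)
  moreover have "effective E'" "deg H E' = int (Suc k)" "\<forall>w. w \<notin> A \<longrightarrow> E' w = 0"
    using E y unfolding E'_def effective_def deg_add[of H E "indicator {y}"] deg_indicator_singleton[OF fV y(2)]
    by (auto split: split_indicator)
  ultimately have "has_effective_equiv H (\<lambda>w. Q w - E' w)"
    using test unfolding rank_test_def by blast
  moreover have "(\<lambda>w. Q w - E' w) = (\<lambda>w. Q w - indicator {y} w - E w)"
    unfolding E'_def by auto
  ultimately show "has_effective_equiv H (\<lambda>w. Q w - indicator {y} w - E w)" by simp
qed

lemma rank_test_SucI:
  assumes fV: "finite (verts H)"
    and test: "\<And>x. x \<in> A \<Longrightarrow> x \<in> verts H \<Longrightarrow> rank_test H (\<lambda>w. Q w - indicator {x} w) A k"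
  shows "rank_test H Q A (Suc k)"
  unfolding rank_test_def
proof (intro ballI impI)
  fix E assume E: "E \<in> Div H" "effective E \<and> deg H E = int (Suc k) \<and> (\<forall>w. w \<notin> A \<longrightarrow> E w = 0)"
  obtain x where x: "x \<in> verts H" "1 \<le> E x"
  proof (rule ccontr)
    assume "\<not> thesis"
    then have "\<forall>x\<in>verts H. E x \<le> 0" using that by force
    then have "deg H E \<le> 0" unfolding deg_def by (simp add: sum_nonpos)
    then show False using E by simp
  qed
  have "x \<in> A" using x E by auto
  define E' where "E' w = E w - indicator {x} w" for w
  have "E' \<in> Div H" using E(1) x unfolding E'_def Div_def by (auto split: split_indicator)
  moreover have "effective E'" "deg H E' = int k" "\<forall>w. w \<notin> A \<longrightarrow> E' w = 0"
    using E x \<open>x \<in> A\<close>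
    unfolding E'_def effective_def deg_diff[of H E "indicator {x}"] deg_indicator_singleton[OF fV x(1)]
    by (auto split: split_indicator)
  ultimately have "has_effective_equiv H (\<lambda>w. Q w - indicator {x} w - E' w)"
    using test[OF \<open>x \<in> A\<close> x(1)] unfolding rank_test_def by blast
  moreover have "(\<lambda>w. Q w - indicator {x} w - E' w) = (\<lambda>w. Q w - E w)"
    unfolding E'_def by auto
  ultimately show "has_effective_equiv H (\<lambda>w. Q w - E w)" by simp
qed

section \<open>Paths whose interior vertices have degree two\<close>

text \<open>The prototype is a subdivided edge.\<close>
locale degree_two_path =
  fixes H :: "('v,'e) mgraph" and p :: "nat \<Rightarrow> 'v" and \<epsilon> :: "nat \<Rightarrow> 'e" and K :: nat
  assumes wf: "wf_graph H" and con: "connected_graph H"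
    and path_verts: "\<And>i. i \<le> Suc K \<Longrightarrow> p i \<in> verts H"
    and path_inj: "inj_on p {0..Suc K}"
    and path_edges: "\<And>i. i \<le> K \<Longrightarrow> \<epsilon> i \<in> edges H"
    and path_ends: "\<And>i. i \<le> K \<Longrightarrow> ends H (\<epsilon> i) = (p i, p (Suc i)) \<or> ends H (\<epsilon> i) = (p (Suc i), p i)"
    and interior_edges: "\<And>i e. 1 \<le> i \<Longrightarrow> i \<le> K \<Longrightarrow> e \<in> edges H \<Longrightarrow>
        fst (ends H e) = p i \<or> snd (ends H e) = p i \<Longrightarrow> e = \<epsilon> (i - 1) \<or> e = \<epsilon> i"
begin

lemma path_eq_iff: "i \<le> Suc K \<Longrightarrow> i' \<le> Suc K \<Longrightarrow> p i = p i' \<longleftrightarrow> i = i'"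
  using path_inj unfolding inj_on_def by auto

lemma reverse: "degree_two_path H (\<lambda>i. p (Suc K - i)) (\<lambda>i. \<epsilon> (K - i)) K"
proof
  show "wf_graph H" "connected_graph H" by (fact wf, fact con)
next
  show "p (Suc K - i) \<in> verts H" for i by (rule path_verts) simp
next
  show "\<epsilon> (K - i) \<in> edges H" for i by (rule path_edges) simp
next
  show "inj_on (\<lambda>i. p (Suc K - i)) {0..Suc K}"
  proof (rule inj_onI)
    fix x y assume "x \<in> {0..Suc K}" "y \<in> {0..Suc K}" "p (Suc K - x) = p (Suc K - y)"
    then have "Suc K - x = Suc K - y" using path_eq_iff by simp
    then show "x = y" using \<open>x \<in> {0..Suc K}\<close> \<open>y \<in> {0..Suc K}\<close> by simp
  qed
next
  fix i assume i: "i \<le> K"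
  have "Suc (K - i) = Suc K - i" using i by simp
  then show "ends H (\<epsilon> (K - i)) = (p (Suc K - i), p (Suc K - Suc i))
      \<or> ends H (\<epsilon> (K - i)) = (p (Suc K - Suc i), p (Suc K - i))"
    using path_ends[of "K - i"] by auto
next
  fix i e assume i: "1 \<le> i" "i \<le> K" and e: "e \<in> edges H"
    and inc: "fst (ends H e) = p (Suc K - i) \<or> snd (ends H e) = p (Suc K - i)"
  have "1 \<le> Suc K - i" "Suc K - i \<le> K" using i by auto
  from interior_edges[OF this e inc]
  have "e = \<epsilon> (Suc K - i - 1) \<or> e = \<epsilon> (Suc K - i)" .
  moreover have "Suc K - i - 1 = K - i" "Suc K - i = K - (i - 1)" using i by auto
  ultimately show "e = \<epsilon> (K - (i - 1)) \<or> e = \<epsilon> (K - i)" by argo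
qed

lemma laplacian_interior:
  assumes i: "1 \<le> i" "i \<le> K"
  shows "laplacian H c (p i) = c (p (i - 1)) + c (p (Suc i)) - 2 * c (p i)"
proof -
  have fE: "finite (edges H)" using wf unfolding wf_graph_def by auto
  have pi: "p i \<in> verts H" using path_verts i by auto
  have ne: "p (i - 1) \<noteq> p i" "p (Suc i) \<noteq> p i" "p (i - 1) \<noteq> p (Suc i)"
    using path_eq_iff i by auto
  have ends1: "ends H (\<epsilon> (i - 1)) = (p (i - 1), p i) \<or> ends H (\<epsilon> (i - 1)) = (p i, p (i - 1))"
    using path_ends[of "i - 1"] i by auto
  have ends2: "ends H (\<epsilon> i) = (p i, p (Suc i)) \<or> ends H (\<epsilon> i) = (p (Suc i), p i)"
    using path_ends[of i] i by auto
  have distinct: "\<epsilon> (i - 1) \<noteq> \<epsilon> i" using ends1 ends2 ne by auto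
  have "edge_flow H c (p i) e = 0" if "e \<in> edges H" "e \<notin> {\<epsilon> (i - 1), \<epsilon> i}" for e
  proof -
    have "\<not> (fst (ends H e) = p i \<or> snd (ends H e) = p i)"
      using interior_edges[OF i that(1)] that(2) by blast
    then show ?thesis unfolding edge_flow_def by simp
  qed
  moreover have "{\<epsilon> (i - 1), \<epsilon> i} \<subseteq> edges H" using path_edges i by simp
  ultimately have "laplacian H c (p i) = (\<Sum>e\<in>{\<epsilon> (i - 1), \<epsilon> i}. edge_flow H c (p i) e)"
    unfolding laplacian_eq_sum_edge_flow[OF wf pi] by (intro sum.mono_neutral_right[OF fE]) auto
  also have "\<dots> = (c (p (i - 1)) - c (p i)) + (c (p (Suc i)) - c (p i))"
    using distinct ends1 ends2 ne unfolding edge_flow_def by auto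
  finally show ?thesis by simp
qed

lemma reduced_transfer_to_start:
  assumes red: "reduced H (p j) C" and j: "j \<le> K" and zero: "\<forall>i\<le>j. C (p i) = 0"
  shows "reduced H (p 0) C"
  unfolding reduced_def
proof (intro conjI allI impI)
  show "C \<in> Div H" "effective C" using red unfolding reduced_def by auto
  fix U assume U: "U \<subseteq> verts H" "U \<noteq> {}" "p 0 \<notin> U"
  show "\<not> effective (\<lambda>w. C w + laplacian H (indicator U) w)"
  proof (cases "p j \<in> U")
    case False
    then show ?thesis using red U unfolding reduced_def by blast
  next
    case True
    then obtain k where k: "k < j" "p k \<notin> U" "p (Suc k) \<in> U"
      using ex_least_nat_less[of "\<lambda>i. p i \<in> U" j] U(3) by auto
    have "laplacian H (indicator U) (p (Suc k))
        = indicator U (p k) + indicator U (p (Suc (Suc k))) - 2 * indicator U (p (Suc k))"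
      using laplacian_interior[of "Suc k"] k j by simp
    then have "laplacian H (indicator U) (p (Suc k)) < 0"
      using k by (simp split: split_indicator)
    moreover have "C (p (Suc k)) = 0" using zero k by simp
    ultimately show ?thesis unfolding effective_def by (metis add_0 linorder_not_le)
  qed
qed

lemma segment_boundary_edges:
  assumes ib: "ib \<le> Suc K" and e: "e \<in> edges H"
    and ends: "ends H e = (w, u) \<or> ends H e = (u, w)"
    and u: "u \<in> p ` {ia<..<ib}" and w: "w \<notin> p ` {ia<..<ib}"
  shows "(e = \<epsilon> ia \<and> w = p ia) \<or> (e = \<epsilon> (ib - 1) \<and> w = p ib)"
proof -
  obtain i where i: "ia < i" "i < ib" and ui: "u = p i" using u by auto
  have i_int: "1 \<le> i" "i \<le> K" using i ib by auto
  have "w \<noteq> u" using u w by auto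
  have "fst (ends H e) = p i \<or> snd (ends H e) = p i" using ends ui by auto
  then have "e = \<epsilon> (i - 1) \<or> e = \<epsilon> i" by (rule interior_edges[OF i_int e])
  then show ?thesis
  proof
    assume e1: "e = \<epsilon> (i - 1)"
    then have w1: "w = p (i - 1)"
      using path_ends[of "i - 1"] ends ui \<open>w \<noteq> u\<close> i_int by auto
    have "i - 1 = ia"
    proof (rule ccontr)
      assume "i - 1 \<noteq> ia"
      then have "i - 1 \<in> {ia<..<ib}" using i by auto
      then show False using w w1 by blast
    qed
    then show ?thesis using e1 w1 by simp
  next
    assume e2: "e = \<epsilon> i"
    then have w2: "w = p (Suc i)"
      using path_ends[of i] ends ui \<open>w \<noteq> u\<close> i_int by auto
    have "Suc i = ib"
    proof (rule ccontr)
      assume "Suc i \<noteq> ib"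
      then have "Suc i \<in> {ia<..<ib}" using i by auto
      then show False using w w2 by blast
    qed
    then show ?thesis using e2 w2 by auto
  qed
qed

lemma edge_flow_segment_complement:
  assumes ib: "ib \<le> Suc K" and e: "e \<in> edges H" and w: "w \<in> verts H - p ` {ia<..<ib}"
  shows "- ((if e = \<epsilon> ia \<and> w = p ia then 1 else 0) + (if e = \<epsilon> (ib - 1) \<and> w = p ib then 1 else 0))
    \<le> edge_flow H (indicator (verts H - p ` {ia<..<ib})) w e"
proof -
  define U where "U = verts H - p ` {ia<..<ib}"
  obtain a b where ab: "ends H e = (a, b)" by force
  have ab_in: "a \<in> verts H" "b \<in> verts H" using wf e ab unfolding wf_graph_def by force+
  have leave: "(e = \<epsilon> ia \<and> w = p ia) \<or> (e = \<epsilon> (ib - 1) \<and> w = p ib)"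
    if "u \<in> verts H" "u \<notin> U" "ends H e = (w, u) \<or> ends H e = (u, w)" for u
    using segment_boundary_edges[OF ib e that(3)] that(1,2) w unfolding U_def by blast
  have "w \<in> U" using w unfolding U_def .
  then show ?thesis
    unfolding edge_flow_indicator_mem[OF \<open>w \<in> U\<close>] U_def[symmetric]
    using leave[OF ab_in(2)] leave[OF ab_in(1)] \<open>w \<in> U\<close> ab by (auto split: if_splits)
qed

lemma laplacian_segment_complement:
  assumes ib: "ib \<le> Suc K" and ia: "ia < ib" and w: "w \<in> verts H - p ` {ia<..<ib}"
  shows "- ((if w = p ia then 1 else 0) + (if w = p ib then 1 else 0))
    \<le> laplacian H (indicator (verts H - p ` {ia<..<ib})) w"
proof -
  have fE: "finite (edges H)" using wf unfolding wf_graph_def by auto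
  have edges: "\<epsilon> ia \<in> edges H" "\<epsilon> (ib - 1) \<in> edges H" using path_edges ia ib by auto
  define A where "A e = (if e = \<epsilon> ia \<and> w = p ia then 1 else (0::int))" for e
  define B where "B e = (if e = \<epsilon> (ib - 1) \<and> w = p ib then 1 else (0::int))" for e
  have "sum A (edges H) = (if w = p ia then 1 else 0)" "sum B (edges H) = (if w = p ib then 1 else 0)"
    unfolding A_def B_def using edges by (simp_all add: sum.delta[OF fE])
  then have "- ((if w = p ia then 1 else 0) + (if w = p ib then 1 else 0))
      = (\<Sum>e\<in>edges H. - (A e + B e))"
    by (simp only: sum_negf sum.distrib)
  also have "\<dots> \<le> laplacian H (indicator (verts H - p ` {ia<..<ib})) w"
    using w unfolding laplacian_eq_sum_edge_flow[OF wf DiffD1[OF w]] A_def B_def by (intro sum_mono edge_flow_segment_complement[OF ib]) auto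
  finally show ?thesis .
qed

lemma reduced_zero_on_one_side:
  assumes red: "reduced H (p j) C" and ij: "ia < j" "j < ib" and ib: "ib \<le> Suc K"
  shows "C (p ia) = 0 \<or> C (p ib) = 0"
proof (rule ccontr)
  assume "\<not> (C (p ia) = 0 \<or> C (p ib) = 0)"
  moreover have C_nonneg: "0 \<le> C w" for w using red unfolding reduced_def effective_def by auto
  ultimately have chips: "1 \<le> C (p ia)" "1 \<le> C (p ib)"
    by (metis order_le_less zero_less_iff_neq_zero int_one_le_iff_zero_less)+
  define U where "U = verts H - p ` {ia<..<ib}"
  have "p ia \<noteq> p ib" using path_eq_iff ij ib by simp
  have "0 \<le> C w + laplacian H (indicator U) w" for w
  proof (cases "w \<in> U")
    case True
    then have "- ((if w = p ia then 1 else 0) + (if w = p ib then 1 else 0)) \<le> laplacian H (indicator U) w"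
      unfolding U_def using laplacian_segment_complement[OF ib] ij by simp
    then show ?thesis using chips C_nonneg[of w] \<open>p ia \<noteq> p ib\<close> by (auto split: if_splits)
  next
    case False
    then show ?thesis using C_nonneg[of w] laplacian_indicator_nonneg[OF wf] by (simp add: add_nonneg_nonneg)
  qed
  moreover have "p ia \<in> U"
    unfolding U_def using path_verts path_eq_iff ij ib by auto
  moreover have "p j \<notin> U" unfolding U_def using ij by auto
  ultimately show False
    using red unfolding reduced_def effective_def U_def by blast
qed

lemma has_effective_equiv_interior:
  assumes j: "1 \<le> j" "j \<le> K" and Q: "Q \<in> Div H"
    and start: "has_effective_equiv H (\<lambda>w. Q w - indicator {p 0} w)"
    and stop: "has_effective_equiv H (\<lambda>w. Q w - indicator {p (Suc K)} w)"
  shows "has_effective_equiv H (\<lambda>w. Q w - indicator {p j} w)"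
proof -
  have p0: "p 0 \<in> verts H" and pK: "p (Suc K) \<in> verts H" and pj: "p j \<in> verts H"
    using path_verts j by auto
  obtain C c where red: "reduced H (p j) C" and C: "\<forall>w. C w = Q w + laplacian H c w"
    using reduced_divisor_exists[OF wf con pj Q has_effective_equiv_of_diff_indicator[OF Q p0 start]] .
  show ?thesis
  proof (cases "C (p j) = 0")
    case False
    then show ?thesis
      using has_effective_equiv_diff_indicator_of_chip[OF Q pj C] red unfolding reduced_def by blast
  next
    case True
    consider (left) "\<forall>i\<le>j. C (p i) = 0" | (right) "\<forall>i. j \<le> i \<and> i \<le> Suc K \<longrightarrow> C (p i) = 0"
      | (both) ia ib where "ia < j" "j < ib" "ib \<le> Suc K" "C (p ia) \<noteq> 0" "C (p ib) \<noteq> 0"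
      using True by (metis le_neq_implies_less)
    then show ?thesis
    proof cases
      case left
      then have "reduced H (p 0) C" using reduced_transfer_to_start[OF red] j by simp
      then show ?thesis using reduced_zero_at_base[OF wf p0 _ _ C Q] left start by simp
    next
      case right
      interpret rev: degree_two_path H "\<lambda>i. p (Suc K - i)" "\<lambda>i. \<epsilon> (K - i)" K by (rule reverse)
      have "reduced H (p (Suc K - (Suc K - j))) C" using red j by simp
      then have "reduced H (p (Suc K - 0)) C"
        using rev.reduced_transfer_to_start[of "Suc K - j" C] right j by simp
      then show ?thesis using reduced_zero_at_base[OF wf pK _ _ C Q] right[rule_format, of "Suc K"] j stop by simp
    next
      case both
      then show ?thesis using reduced_zero_on_one_side[OF red] by blast
    qed
  qed
qed

end

section \<open>Subdivisions\<close>

lemma convex_slope_bounds: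
  fixes h :: "nat \<Rightarrow> int"
  assumes convex: "\<And>i. 1 \<le> i \<Longrightarrow> i \<le> K \<Longrightarrow> 0 \<le> h (i - 1) + h (Suc i) - 2 * h i"
  shows "(int K + 1) * (h 1 - h 0) \<le> h (Suc K) - h 0"
    and "(int K + 1) * (h K - h (Suc K)) \<le> h 0 - h (Suc K)"
proof -
  define d where "d i = h (Suc i) - h i" for i
  have mono: "d i \<le> d i'" if "i \<le> i'" "i' \<le> K" for i i'
    using that(1)
  proof (induction i' rule: dec_induct)
    case (step n)
    then show ?case using convex[of "Suc n"] that(2) unfolding d_def by simp
  qed simp
  have telescope: "(\<Sum>i<Suc K. d i) = h (Suc K) - h 0"
    unfolding d_def by (rule sum_lessThan_telescope)
  have "(\<Sum>i<Suc K. d 0) \<le> (\<Sum>i<Suc K. d i)" by (rule sum_mono) (use mono in auto)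
  then show "(int K + 1) * (h 1 - h 0) \<le> h (Suc K) - h 0"
    using telescope unfolding d_def by (simp add: algebra_simps)
  have "(\<Sum>i<Suc K. d i) \<le> (\<Sum>i<Suc K. d K)" by (rule sum_mono) (use mono in auto)
  then show "(int K + 1) * (h K - h (Suc K)) \<le> h 0 - h (Suc K)"
    using telescope unfolding d_def by (simp add: algebra_simps)
qed

locale subdivision =
  fixes G :: "('v,'e) mgraph" and K :: "'e \<Rightarrow> nat"
  assumes wf: "wf_graph G" and con: "connected_graph G"
begin

abbreviation "G' \<equiv> subdivide G K"
abbreviation "pt \<equiv> sub_pt G K"

lemma finite_verts: "finite (verts G)" and finite_edges: "finite (edges G)"
  and ends_in_verts: "\<And>e. e \<in> edges G \<Longrightarrow> fst (ends G e) \<in> verts G \<and> snd (ends G e) \<in> verts G"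
  using wf unfolding wf_graph_def by auto

lemma verts_subdivide: "verts G' = Inl ` verts G \<union> {Inr (e,i) | e i. e \<in> edges G \<and> 1 \<le> i \<and> i \<le> K e}"
  by (simp add: subdivide_def)

lemma edges_subdivide: "edges G' = Sigma (edges G) (\<lambda>e. {..K e})"
  by (auto simp: subdivide_def)

lemma ends_subdivide: "ends G' (e,i) = (pt e i, pt e (Suc i))"
  by (simp add: subdivide_def)

lemma Inl_in_verts_iff: "Inl u \<in> verts G' \<longleftrightarrow> u \<in> verts G"
  by (auto simp: verts_subdivide)

lemma Inr_in_verts_iff: "Inr (e,i) \<in> verts G' \<longleftrightarrow> e \<in> edges G \<and> 1 \<le> i \<and> i \<le> K e"
  by (auto simp: verts_subdivide)

lemma pt_0: "pt e 0 = Inl (fst (ends G e))"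
  by (simp add: sub_pt_def)

lemma pt_last: "pt e (Suc (K e)) = Inl (snd (ends G e))"
  by (simp add: sub_pt_def)

lemma pt_interior: "1 \<le> i \<Longrightarrow> i \<le> K e \<Longrightarrow> pt e i = Inr (e,i)"
  by (simp add: sub_pt_def)

lemma pt_in_verts: "e \<in> edges G \<Longrightarrow> i \<le> Suc (K e) \<Longrightarrow> pt e i \<in> verts G'"
  using ends_in_verts[of e] by (auto simp: sub_pt_def verts_subdivide le_Suc_eq)

lemma finite_verts_subdivide: "finite (verts G')"
proof -
  have "{Inr (e,i) | e i. e \<in> edges G \<and> 1 \<le> i \<and> i \<le> K e} \<subseteq> Inr ` Sigma (edges G) (\<lambda>e. {..K e})"
    by auto
  moreover have "finite (Inr ` Sigma (edges G) (\<lambda>e. {..K e}))" using finite_edges by auto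
  ultimately have "finite {Inr (e,i) | e i. e \<in> edges G \<and> 1 \<le> i \<and> i \<le> K e}"
    by (rule finite_subset)
  then show ?thesis unfolding verts_subdivide using finite_verts by blast
qed

lemma finite_edges_subdivide: "finite (edges G')"
  unfolding edges_subdivide using finite_edges by auto

lemma wf_subdivide: "wf_graph G'"
  unfolding wf_graph_def
proof (intro conjI finite_verts_subdivide finite_edges_subdivide ballI)
  fix x assume x: "x \<in> edges G'"
  obtain e i where x': "x = (e,i)" by force
  have e: "e \<in> edges G" and i: "i \<le> K e" using x x' by (auto simp: edges_subdivide)
  show "fst (ends G' x) \<in> verts G'" "snd (ends G' x) \<in> verts G'"
    unfolding x' ends_subdivide fst_conv snd_conv using pt_in_verts[OF e] i by auto
qed

lemma pt_reachable: "e \<in> edges G \<Longrightarrow> i \<le> Suc (K e) \<Longrightarrow> (adj G')\<^sup>*\<^sup>* (pt e 0) (pt e i)"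
proof (induction i)
  case (Suc i)
  have "(e,i) \<in> edges G'" using Suc.prems by (auto simp: edges_subdivide)
  then have "adj G' (pt e i) (pt e (Suc i))" unfolding adj_def using ends_subdivide by blast
  then show ?case using Suc by (meson Suc_leD rtranclp.rtrancl_into_rtrancl)
qed simp

lemma connected_subdivide: "connected_graph G'"
proof -
  have sym: "(adj G')\<^sup>*\<^sup>* y x" if "(adj G')\<^sup>*\<^sup>* x y" for x y
    using sympD[OF symp_rtranclp[OF symp_adj] that] .
  have edge: "(adj G')\<^sup>*\<^sup>* (Inl a) (Inl b)" if ab: "adj G a b" for a b
  proof -
    obtain e where e: "e \<in> edges G" "ends G e = (a,b) \<or> ends G e = (b,a)"
      using ab unfolding adj_def by blast
    have "(adj G')\<^sup>*\<^sup>* (Inl (fst (ends G e))) (Inl (snd (ends G e)))"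
      using pt_reachable[OF e(1), of "Suc (K e)"] by (simp add: pt_0 pt_last)
    with e(2) sym show ?thesis by auto
  qed
  have old: "(adj G')\<^sup>*\<^sup>* (Inl a) (Inl b)" if "(adj G)\<^sup>*\<^sup>* a b" for a b
    using that
  proof (induction rule: rtranclp_induct)
    case (step y z)
    then show ?case using edge by (meson rtranclp_trans)
  qed simp
  obtain u0 where u0: "u0 \<in> verts G" using con unfolding connected_graph_def by auto
  have reach: "(adj G')\<^sup>*\<^sup>* (Inl u0) x" if x: "x \<in> verts G'" for x
  proof -
    obtain a where a: "a \<in> verts G" "(adj G')\<^sup>*\<^sup>* (Inl a) x"
    proof (cases x)
      case (Inl u)
      then show ?thesis using that x Inl_in_verts_iff by blast
    next
      case (Inr y)
      then obtain e i where y: "x = Inr (e,i)" by (cases y) auto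
      then have e: "e \<in> edges G" and i: "1 \<le> i" "i \<le> K e" using x Inr_in_verts_iff by auto
      have "(adj G')\<^sup>*\<^sup>* (Inl (fst (ends G e))) x"
        using pt_reachable[OF e, of i] i y pt_interior[OF i] pt_0 by simp
      then show ?thesis using that ends_in_verts[OF e] by blast
    qed
    have "(adj G)\<^sup>*\<^sup>* u0 a" using con u0 a(1) unfolding connected_graph_def by auto
    then show ?thesis using old a(2) by (meson rtranclp_trans)
  qed
  show ?thesis unfolding connected_graph_def
  proof (intro conjI ballI)
    show "verts G' \<noteq> {}" using u0 Inl_in_verts_iff by blast
    fix x y assume "x \<in> verts G'" "y \<in> verts G'"
    then show "(adj G')\<^sup>*\<^sup>* x y" using reach sym by (meson rtranclp_trans)
  qed
qed

lemma laplacian_subdivide_Inl: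
  assumes u: "u \<in> verts G"
  shows "laplacian G' c (Inl u) = (\<Sum>e\<in>edges G. (if fst (ends G e) = u then c (pt e 1) - c (Inl u) else 0)
                + (if snd (ends G e) = u then c (pt e (K e)) - c (Inl u) else 0))"
proof -
  have "laplacian G' c (Inl u) = (\<Sum>x\<in>Sigma (edges G) (\<lambda>e. {..K e}). edge_flow G' c (Inl u) x)"
    using laplacian_eq_sum_edge_flow[OF wf_subdivide Inl_in_verts_iff[THEN iffD2, OF u]] edges_subdivide by simp
  also have "\<dots> = (\<Sum>e\<in>edges G. \<Sum>i\<in>{..K e}. edge_flow G' c (Inl u) (e,i))"
    using finite_edges by (simp add: sum.Sigma)
  also have "\<dots> = (\<Sum>e\<in>edges G. (if fst (ends G e) = u then c (pt e 1) - c (Inl u) else 0)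
                + (if snd (ends G e) = u then c (pt e (K e)) - c (Inl u) else 0))"
  proof (rule sum.cong[OF refl])
    fix e assume e: "e \<in> edges G"
    have "(\<Sum>i\<in>{..K e}. edge_flow G' c (Inl u) (e,i)) = (\<Sum>i\<in>{..K e}.
        (if i = 0 then (if fst (ends G e) = u then c (pt e 1) - c (Inl u) else 0) else 0)
      + (if i = K e then (if snd (ends G e) = u then c (pt e (K e)) - c (Inl u) else 0) else 0))"
    proof (rule sum.cong[OF refl])
      fix i assume i: "i \<in> {..K e}"
      have a: "pt e i = Inl u \<longleftrightarrow> i = 0 \<and> fst (ends G e) = u" using i by (auto simp: sub_pt_def)
      have b: "pt e (Suc i) = Inl u \<longleftrightarrow> i = K e \<and> snd (ends G e) = u" using i by (auto simp: sub_pt_def)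
      show "edge_flow G' c (Inl u) (e,i) = (if i = 0 then (if fst (ends G e) = u then c (pt e 1) - c (Inl u) else 0) else 0)
      + (if i = K e then (if snd (ends G e) = u then c (pt e (K e)) - c (Inl u) else 0) else 0)"
        unfolding edge_flow_def ends_subdivide fst_conv snd_conv using a b by auto
    qed
    also have "\<dots> = (if fst (ends G e) = u then c (pt e 1) - c (Inl u) else 0)
                + (if snd (ends G e) = u then c (pt e (K e)) - c (Inl u) else 0)"
      by (simp add: sum.distrib)
    finally show "(\<Sum>i\<in>{..K e}. edge_flow G' c (Inl u) (e,i)) = \<dots>" .
  qed
  finally show ?thesis .
qed

lemma pt_eq_Inr_iff:
  "i \<le> K e' \<Longrightarrow> 1 \<le> j \<Longrightarrow> j \<le> K e \<Longrightarrow> pt e' i = Inr (e,j) \<longleftrightarrow> (e',i) = (e,j)"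
  by (auto simp: sub_pt_def)

lemma pt_Suc_eq_Inr_iff:
  "i \<le> K e' \<Longrightarrow> 1 \<le> j \<Longrightarrow> j \<le> K e \<Longrightarrow> pt e' (Suc i) = Inr (e,j) \<longleftrightarrow> (e',i) = (e,j-1)"
  by (auto simp: sub_pt_def)

lemma laplacian_subdivide_Inr:
  assumes e: "e \<in> edges G" and j: "1 \<le> j" "j \<le> K e"
  shows "laplacian G' c (Inr (e,j)) = c (pt e (j-1)) + c (pt e (Suc j)) - 2 * c (Inr (e,j))"
proof -
  have wV: "Inr (e,j) \<in> verts G'" using Inr_in_verts_iff e j by auto
  have "laplacian G' c (Inr (e,j)) = (\<Sum>x\<in>edges G'. (if x = (e,j) then c (pt e (Suc j)) - c (Inr (e,j)) else 0)
       + (if x = (e, j-1) then c (pt e (j-1)) - c (Inr (e,j)) else 0))"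
    unfolding laplacian_eq_sum_edge_flow[OF wf_subdivide wV]
  proof (rule sum.cong[OF refl])
    fix x assume x: "x \<in> edges G'"
    obtain e' i where x': "x = (e',i)" by force
    have i: "i \<le> K e'" using x x' by (auto simp: edges_subdivide)
    have a: "pt e' i = Inr (e,j) \<longleftrightarrow> x = (e,j)" using pt_eq_Inr_iff[OF i j] x' by simp
    have b: "pt e' (Suc i) = Inr (e,j) \<longleftrightarrow> x = (e,j-1)" using pt_Suc_eq_Inr_iff[OF i j] x' by simp
    have et: "edge_flow G' c (Inr (e,j)) x = (if pt e' i = Inr (e,j) then c (pt e' (Suc i)) - c (Inr (e,j)) else 0)
       + (if pt e' (Suc i) = Inr (e,j) then c (pt e' i) - c (Inr (e,j)) else 0)"
      unfolding edge_flow_def x' ends_subdivide fst_conv snd_conv ..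
    show "edge_flow G' c (Inr (e,j)) x = (if x = (e,j) then c (pt e (Suc j)) - c (Inr (e,j)) else 0)
       + (if x = (e, j-1) then c (pt e (j-1)) - c (Inr (e,j)) else 0)"
      unfolding et a b using x' by (cases "x = (e,j)"; cases "x = (e,j-1)") auto
  qed
  also have "\<dots> = (c (pt e (Suc j)) - c (Inr (e,j))) + (c (pt e (j-1)) - c (Inr (e,j)))"
  proof -
    have mem: "(e,j) \<in> edges G'" "(e,j-1) \<in> edges G'" using e j by (auto simp: edges_subdivide)
    show ?thesis by (simp only: sum.distrib sum.delta[OF finite_edges_subdivide] mem if_True)
  qed
  finally show ?thesis by linarith
qed

lemma degree_two_path_subdivided_edge:
  assumes e: "e \<in> edges G" and ne: "fst (ends G e) \<noteq> snd (ends G e)"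
  shows "degree_two_path G' (pt e) (\<lambda>i. (e,i)) (K e)"
proof
  show "wf_graph G'" by (rule wf_subdivide)
  show "connected_graph G'" by (rule connected_subdivide)
  show "\<And>i. i \<le> Suc (K e) \<Longrightarrow> pt e i \<in> verts G'" using pt_in_verts[OF e] .
  show "inj_on (pt e) {0..Suc (K e)}"
    unfolding inj_on_def using ne by (auto simp: sub_pt_def split: if_splits)
  show "\<And>i. i \<le> K e \<Longrightarrow> (e, i) \<in> edges G'" using e by (auto simp: edges_subdivide)
  show "\<And>i. i \<le> K e \<Longrightarrow> ends G' (e, i) = (pt e i, pt e (Suc i)) \<or> ends G' (e, i) = (pt e (Suc i), pt e i)"
    by (simp add: ends_subdivide)
  fix i x assume i: "1 \<le> i" "i \<le> K e" and x: "x \<in> edges G'"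
    and inc: "fst (ends G' x) = pt e i \<or> snd (ends G' x) = pt e i"
  obtain e' i' where x': "x = (e',i')" by force
  have i': "i' \<le> K e'" using x x' by (auto simp: edges_subdivide)
  have "(e',i') = (e,i) \<or> (e',i') = (e,i - 1)"
    using inc pt_eq_Inr_iff[OF i' i] pt_Suc_eq_Inr_iff[OF i' i] pt_interior[OF i]
    unfolding x' ends_subdivide by auto
  then show "x = (e, i - 1) \<or> x = (e, i)" using x' by auto
qed

lemma nonneg_of_dominating_slopes:
  assumes F: "F \<in> Div G" and eff: "\<forall>x. 0 \<le> sigma_star F x + laplacian G' f x"
    and slope_fwd: "\<And>e s. e \<in> edges G \<Longrightarrow>
      (int (K e) + 1) * s \<le> f (Inl (snd (ends G e))) - f (Inl (fst (ends G e))) \<Longrightarrow>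
      s \<le> g (snd (ends G e)) - g (fst (ends G e))"
    and slope_bwd: "\<And>e s. e \<in> edges G \<Longrightarrow>
      (int (K e) + 1) * s \<le> f (Inl (fst (ends G e))) - f (Inl (snd (ends G e))) \<Longrightarrow>
      s \<le> g (fst (ends G e)) - g (snd (ends G e))"
  shows "0 \<le> F u + laplacian G g u"
proof (cases "u \<in> verts G")
  case False
  then show ?thesis using F laplacian_outside[of u G] unfolding Div_def by simp
next
  case True
  have at_u: "0 \<le> F u + laplacian G' f (Inl u)"
    using eff[rule_format, of "Inl u"] by (simp add: sigma_star_def)
  have "laplacian G' f (Inl u) \<le> laplacian G g u"
    unfolding laplacian_subdivide_Inl[OF True] laplacian_eq_sum_edge_flow[OF wf True]
  proof (rule sum_mono)
    fix e assume e: "e \<in> edges G"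
    define h where "h i = f (pt e i)" for i
    have convex: "0 \<le> h (i - 1) + h (Suc i) - 2 * h i" if "1 \<le> i" "i \<le> K e" for i
    proof -
      have "0 \<le> sigma_star F (Inr (e,i)) + laplacian G' f (Inr (e,i))" using eff by blast
      then show ?thesis
        using laplacian_subdivide_Inr[OF e that] pt_interior[OF that] unfolding h_def
        by (simp add: sigma_star_def)
    qed
    note slopes = convex_slope_bounds[of "K e" h, OF convex]
    have h0: "h 0 = f (Inl (fst (ends G e)))" and hK: "h (Suc (K e)) = f (Inl (snd (ends G e)))"
      unfolding h_def by (simp_all add: pt_0 pt_last)
    have a: "f (pt e 1) - f (Inl (fst (ends G e))) \<le> g (snd (ends G e)) - g (fst (ends G e))"
      using slope_fwd[OF e slopes(1)[unfolded h0 hK]] unfolding h_def by simp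
    have b: "f (pt e (K e)) - f (Inl (snd (ends G e))) \<le> g (fst (ends G e)) - g (snd (ends G e))"
      using slope_bwd[OF e slopes(2)[unfolded h0 hK]] unfolding h_def by simp
    show "(if fst (ends G e) = u then f (pt e 1) - f (Inl u) else 0) +
          (if snd (ends G e) = u then f (pt e (K e)) - f (Inl u) else 0) \<le> edge_flow G g u e"
      unfolding edge_flow_def using a b by auto
  qed
  then show ?thesis using at_u by linarith
qed

definition affine_along_edges :: "('v + 'e \<times> nat \<Rightarrow> int) \<Rightarrow> ('v \<Rightarrow> int) \<Rightarrow> bool" where
  "affine_along_edges c' g \<longleftrightarrow> (\<forall>e\<in>edges G. \<forall>i\<le>Suc (K e).
     c' (pt e i) = c' (pt e 0) + int i * (g (snd (ends G e)) - g (fst (ends G e))))"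

lemma affine_along_edgesD:
  "affine_along_edges c' g \<Longrightarrow> e \<in> edges G \<Longrightarrow> i \<le> Suc (K e) \<Longrightarrow>
    c' (pt e i) = c' (pt e 0) + int i * (g (snd (ends G e)) - g (fst (ends G e)))"
  unfolding affine_along_edges_def by blast

lemma laplacian_subdivide_Inl_affine:
  assumes affine: "affine_along_edges c' g" and u: "u \<in> verts G"
  shows "laplacian G' c' (Inl u) = laplacian G g u"
proof -
  have "edge_flow G g u e = (if fst (ends G e) = u then c' (pt e 1) - c' (Inl u) else 0)
      + (if snd (ends G e) = u then c' (pt e (K e)) - c' (Inl u) else 0)" if e: "e \<in> edges G" for e
  proof -
    have "c' (pt e 1) = c' (Inl (fst (ends G e))) + (g (snd (ends G e)) - g (fst (ends G e)))"
      using affine_along_edgesD[OF affine e, of 1] by (simp add: pt_0)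
    moreover have "c' (pt e (K e)) = c' (Inl (snd (ends G e))) - (g (snd (ends G e)) - g (fst (ends G e)))"
    proof -
      have "c' (pt e (K e)) = c' (pt e 0) + int (K e) * (g (snd (ends G e)) - g (fst (ends G e)))"
        "c' (pt e (Suc (K e))) = c' (pt e 0) + int (Suc (K e)) * (g (snd (ends G e)) - g (fst (ends G e)))"
        using affine_along_edgesD[OF affine e, of "K e"] affine_along_edgesD[OF affine e, of "Suc (K e)"]
        by simp_all
      then show ?thesis unfolding pt_last by (simp add: algebra_simps)
    qed
    ultimately show ?thesis unfolding edge_flow_def by auto
  qed
  then show ?thesis
    unfolding laplacian_subdivide_Inl[OF u] laplacian_eq_sum_edge_flow[OF wf u] by (rule sum.cong[OF refl, symmetric])
qed

lemma laplacian_subdivide_Inr_affine: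
  assumes affine: "affine_along_edges c' g" and e: "e \<in> edges G" and i: "1 \<le> i" "i \<le> K e"
  shows "laplacian G' c' (Inr (e,i)) = 0"
proof -
  define s where "s = g (snd (ends G e)) - g (fst (ends G e))"
  have "c' (pt e (i - 1)) = c' (pt e 0) + int i * s - s"
    using affine_along_edgesD[OF affine e, of "i - 1"] i unfolding s_def
    by (simp add: of_nat_diff algebra_simps)
  moreover have "c' (pt e (Suc i)) = c' (pt e 0) + int i * s + s"
    using affine_along_edgesD[OF affine e, of "Suc i"] i unfolding s_def by (simp add: algebra_simps)
  moreover have "c' (pt e i) = c' (pt e 0) + int i * s"
    using affine_along_edgesD[OF affine e, of i] i unfolding s_def by simp
  moreover have "laplacian G' c' (Inr (e,i)) = c' (pt e (i - 1)) + c' (pt e (Suc i)) - 2 * c' (pt e i)"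
    using laplacian_subdivide_Inr[OF e i, of c'] pt_interior[OF i] by simp
  ultimately show ?thesis by linarith
qed

lemma sigma_star_laplacian_eq:
  assumes affine: "affine_along_edges c' g"
  shows "sigma_star (laplacian G g) = laplacian G' c'"
proof
  fix x
  show "sigma_star (laplacian G g) x = laplacian G' c' x"
  proof (cases "x \<in> verts G'")
    case True
    then consider u where "x = Inl u" "u \<in> verts G"
      | e i where "x = Inr (e,i)" "e \<in> edges G" "1 \<le> i" "i \<le> K e"
      by (auto simp: verts_subdivide)
    then show ?thesis
      by cases (simp_all add: sigma_star_def laplacian_subdivide_Inl_affine[OF affine]
          laplacian_subdivide_Inr_affine[OF affine])
  next
    case False
    then show ?thesis
      using laplacian_outside[OF False] laplacian_outside[of _ G] Inl_in_verts_iff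
      by (cases x) (auto simp: sigma_star_def)
  qed
qed

lemma sigma_star_Div: "F \<in> Div G \<Longrightarrow> (sigma_star F :: 'v + 'e \<times> nat \<Rightarrow> int) \<in> Div G'"
  unfolding Div_def sigma_star_def by (auto simp: subdivide_def split: sum.splits)

lemma deg_subdivide_old_support:
  assumes "\<forall>w. w \<notin> Inl ` verts G \<longrightarrow> X w = 0"
  shows "deg G' X = (\<Sum>u\<in>verts G. X (Inl u))"
proof -
  have "deg G' X = (\<Sum>w\<in>Inl ` verts G. X w)"
    unfolding deg_def using assms finite_verts_subdivide
    by (intro sum.mono_neutral_right) (auto simp: verts_subdivide)
  also have "\<dots> = (\<Sum>u\<in>verts G. X (Inl u))" by (simp add: sum.reindex)
  finally show ?thesis .
qed

lemma deg_sigma_star: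
  assumes "F \<in> Div G"
  shows "deg G' (sigma_star F) = deg G F"
proof -
  have "\<forall>w. w \<notin> Inl ` verts G \<longrightarrow> sigma_star F w = 0"
    using assms unfolding Div_def sigma_star_def by (auto split: sum.splits)
  from deg_subdivide_old_support[OF this] show ?thesis unfolding deg_def sigma_star_def by simp
qed

lemma has_effective_equiv_new_vertex:
  assumes ll: "loopless G" and Q: "Q \<in> Div G'" and x: "x \<in> verts G'"
    and old: "\<And>y. y \<in> Inl ` verts G \<Longrightarrow> has_effective_equiv G' (\<lambda>w. Q w - indicator {y} w)"
  shows "has_effective_equiv G' (\<lambda>w. Q w - indicator {x} w)"
proof (cases "x \<in> Inl ` verts G")
  case False
  then obtain e i where e: "e \<in> edges G" and i: "1 \<le> i" "i \<le> K e" and xi: "x = pt e i"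
    using x pt_interior by (auto simp: verts_subdivide)
  have "fst (ends G e) \<noteq> snd (ends G e)" using ll e unfolding loopless_def by auto
  then interpret edge_path: degree_two_path G' "pt e" "\<lambda>i. (e,i)" "K e"
    by (rule degree_two_path_subdivided_edge[OF e])
  have "has_effective_equiv G' (\<lambda>w. Q w - indicator {pt e 0} w)"
    "has_effective_equiv G' (\<lambda>w. Q w - indicator {pt e (Suc (K e))} w)"
    using old ends_in_verts[OF e] by (simp_all add: pt_0 pt_last)
  then show ?thesis
    unfolding xi by (rule edge_path.has_effective_equiv_interior[OF i Q])
qed (use old in blast)

lemma rank_test_old_vertices:
  assumes ll: "loopless G" and Q: "Q \<in> Div G'" and test: "rank_test G' Q (Inl ` verts G) k"
  shows "rank_test G' Q (verts G') k"
  using Q test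
proof (induction k arbitrary: Q)
  case 0
  then show ?case using rank_test_0[OF finite_verts_subdivide] by blast
next
  case (Suc k)
  have old_in: "Inl ` verts G \<subseteq> verts G'" using Inl_in_verts_iff by blast
  show ?case
  proof (rule rank_test_SucI[OF finite_verts_subdivide])
    fix x assume x: "x \<in> verts G'"
    have "rank_test G' (\<lambda>w. Q w - indicator {x} w) (Inl ` verts G) k"
      unfolding rank_test_def
    proof (intro ballI impI)
      fix E assume E: "E \<in> Div G'" "effective E \<and> deg G' E = int k \<and> (\<forall>w. w \<notin> Inl ` verts G \<longrightarrow> E w = 0)"
      have QE: "(\<lambda>w. Q w - E w) \<in> Div G'" using Suc.prems(1) E(1) unfolding Div_def by auto
      have "has_effective_equiv G' (\<lambda>w. Q w - E w - indicator {y} w)" if y: "y \<in> Inl ` verts G" for y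
      proof -
        have "rank_test G' (\<lambda>w. Q w - indicator {y} w) (Inl ` verts G) k"
          using rank_test_Suc_imp[OF finite_verts_subdivide Suc.prems(2) y] y old_in by blast
        then have "has_effective_equiv G' (\<lambda>w. Q w - indicator {y} w - E w)"
          using E unfolding rank_test_def by blast
        then show ?thesis by (simp add: algebra_simps)
      qed
      then have "has_effective_equiv G' (\<lambda>w. Q w - E w - indicator {x} w)"
        by (rule has_effective_equiv_new_vertex[OF ll QE x])
      then show "has_effective_equiv G' (\<lambda>w. Q w - indicator {x} w - E w)" by (simp add: algebra_simps)
    qed
    then show "rank_test G' (\<lambda>w. Q w - indicator {x} w) (verts G') k"
      using Suc.IH Div_diff_indicator[OF Suc.prems(1) x] by blast
  qed
qed

end

section \<open>Subdividing the two sides of a cut vertex\<close>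

lemma int_div_diff_ge:
  fixes N s X Y :: int
  assumes N: "0 < N" and le: "N * s \<le> X - Y"
  shows "s \<le> X div N - Y div N"
proof -
  have "X = N * (X div N) + X mod N" "Y = N * (Y div N) + Y mod N" by simp_all
  moreover have "X mod N < N" "0 \<le> Y mod N" using N by simp_all
  moreover have "N * (X div N - Y div N + 1) = N * (X div N) - N * (Y div N) + N"
    by (simp add: algebra_simps)
  ultimately have "N * s < N * (X div N - Y div N + 1)" using le by linarith
  then show ?thesis using N by (simp add: mult_less_cancel_left_pos)
qed

locale wedge_subdivision = subdivision G "\<lambda>e. if e \<in> E1 then m else n"
  for G :: "('v,'e) mgraph" and E1 :: "'e set" and m n :: nat +
  fixes v :: 'v and V1 V2 :: "'v set" and E2 :: "'e set"
  assumes wedge: "wedge_decomp G v V1 E1 V2 E2"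
begin

definition scale :: "'v \<Rightarrow> int" where
  "scale u = (if u \<in> V1 then int m + 1 else int n + 1)"

lemma scale_at_end:
  assumes e: "e \<in> edges G" and w: "w = fst (ends G e) \<or> w = snd (ends G e)" and "w \<noteq> v"
  shows "scale w = int (if e \<in> E1 then m else n) + 1"
proof -
  have parts: "V1 \<inter> V2 = {v}" "E1 \<union> E2 = edges G"
    "\<And>e. e \<in> E1 \<Longrightarrow> fst (ends G e) \<in> V1 \<and> snd (ends G e) \<in> V1"
    "\<And>e. e \<in> E2 \<Longrightarrow> fst (ends G e) \<in> V2 \<and> snd (ends G e) \<in> V2"
    using wedge unfolding wedge_decomp_def wf_graph_def subgraph_on_def by auto
  show ?thesis
  proof (cases "e \<in> E1")
    case True
    then show ?thesis using parts(3) w unfolding scale_def by auto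
  next
    case False
    then have "w \<in> V2" using e parts(2,4) w by auto
    then have "w \<notin> V1" using parts(1) \<open>w \<noteq> v\<close> by auto
    then show ?thesis using False unfolding scale_def by simp
  qed
qed

lemma sigma_star_laplacian_lift: "\<exists>c'. sigma_star (laplacian G c) = laplacian G' c'"
proof -
  define lift where "lift u = scale u * (c u - c v)" for u
  have lift_at_end: "lift w = (int (if e \<in> E1 then m else n) + 1) * (c w - c v)"
    if "e \<in> edges G" "w = fst (ends G e) \<or> w = snd (ends G e)" for e w
    using scale_at_end[OF that] unfolding lift_def by (cases "w = v") auto
  define c' where "c' x = (case x of Inl u \<Rightarrow> lift u
      | Inr (e,i) \<Rightarrow> lift (fst (ends G e)) + int i * (c (snd (ends G e)) - c (fst (ends G e))))" for x
  have "sigma_star (laplacian G c) = laplacian G' c'"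
  proof (rule sigma_star_laplacian_eq, unfold affine_along_edges_def, intro ballI allI impI)
    fix e i assume e: "e \<in> edges G" and i: "i \<le> Suc (if e \<in> E1 then m else n)"
    consider "i = 0" | "i = Suc (if e \<in> E1 then m else n)" | "1 \<le> i" "i \<le> (if e \<in> E1 then m else n)"
      using i by linarith
    then show "c' (pt e i) = c' (pt e 0) + int i * (c (snd (ends G e)) - c (fst (ends G e)))"
    proof cases
      case 1
      then show ?thesis by simp
    next
      case 2
      have "lift (snd (ends G e)) = lift (fst (ends G e))
          + (int (if e \<in> E1 then m else n) + 1) * (c (snd (ends G e)) - c (fst (ends G e)))"
        using lift_at_end[OF e, of "fst (ends G e)"] lift_at_end[OF e, of "snd (ends G e)"]
        by (simp add: algebra_simps)
      then show ?thesis using 2 pt_last[of e] unfolding c'_def pt_0 by simp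
    next
      case 3
      then show ?thesis unfolding c'_def pt_interior[OF 3] pt_0 by simp
    qed
  qed
  then show ?thesis by blast
qed

lemma sigma_star_Prin: "D \<in> Prin G \<Longrightarrow> sigma_star D \<in> Prin G'"
  unfolding Prin_eq_range_laplacian using sigma_star_laplacian_lift by blast

lemma has_effective_equiv_sigma_star_iff:
  assumes F: "F \<in> Div G"
  shows "has_effective_equiv G F \<longleftrightarrow> has_effective_equiv G' (sigma_star F)"
proof
  assume "has_effective_equiv G F"
  then obtain c where c: "\<forall>x. 0 \<le> F x + laplacian G c x" using has_effective_equiv_iff[OF F] by auto
  obtain c' where c': "sigma_star (laplacian G c) = laplacian G' c'"
    using sigma_star_laplacian_lift by blast
  have "0 \<le> sigma_star F x + laplacian G' c' x" for x
  proof (cases x)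
    case (Inl u)
    then show ?thesis using c[rule_format, of u] fun_cong[OF c', of x] by (simp add: sigma_star_def)
  next
    case (Inr y)
    then show ?thesis using fun_cong[OF c', of x] by (simp add: sigma_star_def)
  qed
  then show "has_effective_equiv G' (sigma_star F)"
    using has_effective_equiv_iff[OF sigma_star_Div[OF F]] by blast
next
  assume "has_effective_equiv G' (sigma_star F)"
  then obtain f where f: "\<forall>x. 0 \<le> sigma_star F x + laplacian G' f x"
    using has_effective_equiv_iff[OF sigma_star_Div[OF F]] by auto
  define g where "g u = (f (Inl u) - f (Inl v)) div scale u" for u
  have g_at_end: "g w = (f (Inl w) - f (Inl v)) div (int (if e \<in> E1 then m else n) + 1)"
    if "e \<in> edges G" "w = fst (ends G e) \<or> w = snd (ends G e)" for e w
    using scale_at_end[OF that] unfolding g_def by (cases "w = v") auto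
  have "0 \<le> F u + laplacian G g u" for u
  proof (rule nonneg_of_dominating_slopes[OF F f])
    fix e s assume e: "e \<in> edges G" and "(int (if e \<in> E1 then m else n) + 1) * s
      \<le> f (Inl (snd (ends G e))) - f (Inl (fst (ends G e)))"
    then show "s \<le> g (snd (ends G e)) - g (fst (ends G e))"
      using int_div_diff_ge[of _ s "f (Inl (snd (ends G e))) - f (Inl v)" "f (Inl (fst (ends G e))) - f (Inl v)"]
        g_at_end[OF e] by simp
  next
    fix e s assume e: "e \<in> edges G" and "(int (if e \<in> E1 then m else n) + 1) * s
      \<le> f (Inl (fst (ends G e))) - f (Inl (snd (ends G e)))"
    then show "s \<le> g (fst (ends G e)) - g (snd (ends G e))"
      using int_div_diff_ge[of _ s "f (Inl (fst (ends G e))) - f (Inl v)" "f (Inl (snd (ends G e))) - f (Inl v)"]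
        g_at_end[OF e] by simp
  qed
  then show "has_effective_equiv G F" using has_effective_equiv_iff[OF F] by blast
qed

lemma rank_test_sigma_star:
  assumes D: "D \<in> Div G"
  shows "rank_test G D (verts G) k \<longleftrightarrow> rank_test G' (sigma_star D) (Inl ` verts G) k"
proof
  assume test: "rank_test G D (verts G) k"
  show "rank_test G' (sigma_star D) (Inl ` verts G) k"
    unfolding rank_test_def
  proof (intro ballI impI)
    fix E assume E: "E \<in> Div G'" "effective E \<and> deg G' E = int k \<and> (\<forall>w. w \<notin> Inl ` verts G \<longrightarrow> E w = 0)"
    define E0 where "E0 u = E (Inl u)" for u
    have "E0 \<in> Div G" "effective E0" "deg G E0 = int k"
      using E deg_subdivide_old_support[of E] unfolding E0_def Div_def effective_def deg_def by auto
    then have "has_effective_equiv G (\<lambda>x. D x - E0 x)"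
      using test unfolding rank_test_def Div_def by blast
    moreover have "(\<lambda>x. D x - E0 x) \<in> Div G" using D \<open>E0 \<in> Div G\<close> unfolding Div_def by auto
    moreover have "sigma_star (\<lambda>x. D x - E0 x) = (\<lambda>x. sigma_star D x - E x)"
    proof
      fix x show "sigma_star (\<lambda>x. D x - E0 x) x = sigma_star D x - E x"
        using E unfolding E0_def sigma_star_def by (cases x) auto
    qed
    ultimately show "has_effective_equiv G' (\<lambda>x. sigma_star D x - E x)"
      using has_effective_equiv_sigma_star_iff by metis
  qed
next
  assume test: "rank_test G' (sigma_star D) (Inl ` verts G) k"
  show "rank_test G D (verts G) k"
    unfolding rank_test_def
  proof (intro ballI impI)
    fix E assume E: "E \<in> Div G" "effective E \<and> deg G E = int k \<and> (\<forall>w. w \<notin> verts G \<longrightarrow> E w = 0)"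
    have "sigma_star E \<in> Div G'" "effective (sigma_star E)" "deg G' (sigma_star E) = int k"
      "\<forall>w. w \<notin> Inl ` verts G \<longrightarrow> sigma_star E w = 0"
      using sigma_star_Div[OF E(1)] E deg_sigma_star[OF E(1)] unfolding effective_def sigma_star_def
      by (auto split: sum.splits)
    then have "has_effective_equiv G' (\<lambda>x. sigma_star D x - sigma_star E x)"
      using test unfolding rank_test_def by blast
    moreover have "(\<lambda>x. sigma_star D x - sigma_star E x) = sigma_star (\<lambda>x. D x - E x)"
      unfolding sigma_star_def by (auto split: sum.splits)
    moreover have "(\<lambda>x. D x - E x) \<in> Div G" using D E unfolding Div_def by auto
    ultimately show "has_effective_equiv G (\<lambda>x. D x - E x)"
      using has_effective_equiv_sigma_star_iff by metis
  qed
qed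

lemma rank_sigma_star:
  assumes ll: "loopless G" and D: "D \<in> Div G"
  shows "rank G D = rank G' (sigma_star D)"
proof -
  have "rank_test G D (verts G) = rank_test G' (sigma_star D) (verts G')"
    using rank_test_sigma_star[OF D] rank_test_old_vertices[OF ll sigma_star_Div[OF D]]
      rank_test_mono[of "Inl ` verts G" "verts G'"] Inl_in_verts_iff by (intro ext) blast
  then show ?thesis
    unfolding rank_eq_Greatest_rank_test has_effective_equiv_sigma_star_iff[OF D] by simp
qed

end

theorem proposition2p6:
  fixes G :: "('v,'e) mgraph" and v :: 'v and V1 V2 :: "'v set" and E1 E2 :: "'e set"
    and m n :: nat
  assumes "wf_graph G" and "connected_graph G"
    and "wedge_decomp G v V1 E1 V2 E2"
  shows "(\<forall>D\<in>Prin G. (sigma_star D :: 'v + 'e \<times> nat \<Rightarrow> int) \<in> Prin (subdiv_mn G E1 m n))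
       \<and> (loopless G \<longrightarrow>
            (\<forall>D\<in>Div G. rank G D = rank (subdiv_mn G E1 m n) (sigma_star D)))"
proof -
  interpret wedge_subdivision G E1 m n v V1 V2 E2
    by unfold_locales (use assms in auto)
  show ?thesis
    unfolding subdiv_mn_def using sigma_star_Prin rank_sigma_star by blast
qed

end
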